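(* Let $\delta\in\{0,1\}$, $l>0$, let $g\geq 0$ and $n\geq 0$ be integers, let $a,b\in\frac12\mathbb{Z}$ with $2b\equiv 2\delta a \pmod 2$, and let $\mu\neq\emptyset$ be a partition with $\|\mu\|=2b$. Then the subspace of the moduli space $\mathcal{M}_{g,n}(\mathbb{T}M_\delta,(a,b),\mu)$ parametrizing simple tropical curves has dimension $|\mu|+g-1+n$.
   Context: For $\delta\in\{0,1\}$ and $l>0$ let $\varphi_\delta:\mathbb{R}^2\to\mathbb{R}^2$, $\varphi_\delta(x,y)=(x+l,\delta x-y)$. The tropical Möbius strip $\mathbb{T}M_\delta$ is the quotient $\mathbb{R}^2/\langle\varphi_\delta\rangle$ with the integral affine structure induced by $\mathbb{Z}^2\subset\mathbb{R}^2$; it projects onto the tropical elliptic curve $\mathbb{T}E=\mathbb{R}/l\mathbb{Z}$ via $(x,y)\mapsto x$. An abstract tropical curve is a finite metric graph $\Gamma$ whose edges are bounded edges (finite length) or ends (unbounded, infinite length, adjacent to a single vertex); its genus is $g=1-\chi(\Gamma)$. A parametrized tropical curve is a map $h:\Gamma\to\mathbb{T}M_\delta$ that is affine on each edge with integer slope (derivative in $\mathbb{Z}^2$ in the affine charts coming from $\mathbb{R}^2$) and is balanced: at each vertex the sum of outgoing slopes is $0$. The weight of an edge is the integral length of its slope. The curve is simple if $\Gamma$ is trivalent and $h$ is an immersion. The tropical homology group is $H_{1,1}(\mathbb{T}M_\delta,\mathbb{Z})=\{aE+bF: a,b\in\frac12\mathbb{Z},\ 2b\equiv 2\delta a \bmod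 2\}$, where $F$ is the class of a fiber of the projection to $\mathbb{T}E$ and $E$ the class of the boundary at infinity; a curve has class $aE+bF$ when its ends (which are vertical rays) have total weight $2b$ and its tropical intersection number with a fiber is $2a$. For a partition $\mu$ written as multiplicities $(\mu_i)_{i\ge1}$, $|\mu|=\sum_i\mu_i$ and $\|\mu\|=\sum_i i\mu_i$; a curve has tangency profile $\mu$ if it has exactly $\mu_i$ ends of weight $i$ for each $i$. $\mathcal{M}_{g,n}(\mathbb{T}M_\delta,(a,b),\mu)$ denotes the moduli space of genus $g$ parametrized tropical curves in $\mathbb{T}M_\delta$ of class $aE+bF$ with tangency profile $\mu$ and $n$ marked points on $\Gamma$; it is a polyhedral complex whose cells correspond to combinatorial types (the graph together with the slopes of $h$), a curve in a cell being parametrized by its edge lengths (including positions of marked points) and the image of a vertex. *)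

theory Defs
  imports "HOL-Analysis.Analysis" "HOL-Library.Multiset"
begin

text \<open>Points of a parameter space are functions nat => real (only finitely many
coordinates are used; the others are pinned to 0).\<close>

definition aff_indep_fam :: "(nat \<Rightarrow> nat \<Rightarrow> real) \<Rightarrow> nat \<Rightarrow> bool" where
  "aff_indep_fam x d \<longleftrightarrow>
     (\<forall>c::nat \<Rightarrow> real. (\<forall>j. (\<Sum>i\<in>{1..d}. c i * (x i j - x 0 j)) = 0)
        \<longrightarrow> (\<forall>i\<in>{1..d}. c i = 0))"

definition has_aff_dim :: "(nat \<Rightarrow> real) set \<Rightarrow> nat \<Rightarrow> bool" where
  "has_aff_dim S d \<longleftrightarrow>
     (\<exists>x. (\<forall>i\<le>d. x i \<in> S) \<and> aff_indep_fam x d) \<and>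
     \<not> (\<exists>x. (\<forall>i\<le>Suc d. x i \<in> S) \<and> aff_indep_fam x (Suc d))"

definition phi :: "int \<Rightarrow> real \<Rightarrow> real \<times> real \<Rightarrow> real \<times> real" where
  "phi \<delta> l p = (fst p + l, of_int \<delta> * fst p - snd p)"

definition phi_inv :: "int \<Rightarrow> real \<Rightarrow> real \<times> real \<Rightarrow> real \<times> real" where
  "phi_inv \<delta> l p = (fst p - l, of_int \<delta> * (fst p - l) - snd p)"

definition phi_pow :: "int \<Rightarrow> real \<Rightarrow> int \<Rightarrow> real \<times> real \<Rightarrow> real \<times> real" where
  "phi_pow \<delta> l k = (if 0 \<le> k then phi \<delta> l ^^ nat k else phi_inv \<delta> l ^^ nat (- k))"

text \<open>Linear part of phi (an involution) acting on integer slopes, and of phi^k.\<close>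

definition dphi :: "int \<Rightarrow> int \<times> int \<Rightarrow> int \<times> int" where
  "dphi \<delta> s = (fst s, \<delta> * fst s - snd s)"

definition dphi_pow :: "int \<Rightarrow> int \<Rightarrow> int \<times> int \<Rightarrow> int \<times> int" where
  "dphi_pow \<delta> k s = (if even k then s else dphi \<delta> s)"

text \<open>A bounded edge (u, w, s, k): an edge from u to w; given lifts P_u, P_w in R^2 of the
  images of u and w, the edge is the segment from P_u with slope s (in the chart at P_u)
  of length L ending at phi^k(P_w), i.e. P_u + L s = phi^k(P_w).  Its outgoing slope at w,
  in the chart at P_w, is - dphi^k s.
  An end (u, c): an end (vertical ray) adjacent to u with slope (0, c); its weight is |c|.
  A marked point (True, e) lies on bounded edge e, (False, e) lies on end e.\<close>

record ttype =
  tnv :: nat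
  tedges :: "(nat \<times> nat \<times> (int \<times> int) \<times> int) list"
  tends :: "(nat \<times> int) list"
  tmarks :: "(bool \<times> nat) list"

definition out_slopes :: "int \<Rightarrow> ttype \<Rightarrow> nat \<Rightarrow> (int \<times> int) list" where
  "out_slopes \<delta> T v =
     concat (map (\<lambda>(u, w, s, k).
        (if u = v then [s] else []) @
        (if w = v then [(- fst (dphi_pow \<delta> k s), - snd (dphi_pow \<delta> k s))] else []))
       (tedges T))
     @ map (\<lambda>(u, c). (0, c)) (filter (\<lambda>(u, c). u = v) (tends T))"

definition same_direction :: "int \<times> int \<Rightarrow> int \<times> int \<Rightarrow> bool" where
  "same_direction s t \<longleftrightarrow>
     fst s * snd t - snd s * fst t = 0 \<and> fst s * fst t + snd s * snd t > 0"

definition adj :: "ttype \<Rightarrow> (nat \<times> nat) set" where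
  "adj T = {(u, w). \<exists>s k. (u, w, s, k) \<in> set (tedges T)}
         \<union> {(w, u). \<exists>s k. (u, w, s, k) \<in> set (tedges T)}"

definition well_formed :: "ttype \<Rightarrow> bool" where
  "well_formed T \<longleftrightarrow>
     (\<forall>(u, w, s, k) \<in> set (tedges T). u < tnv T \<and> w < tnv T) \<and>
     (\<forall>(u, c) \<in> set (tends T). u < tnv T) \<and>
     (\<forall>(b, e) \<in> set (tmarks T). if b then e < length (tedges T) else e < length (tends T)) \<and>
     0 < tnv T \<and>
     (\<forall>u < tnv T. \<forall>v < tnv T. (u, v) \<in> (adj T)\<^sup>*)"

text \<open>Genus g = 1 - chi(Gamma) = 1 - #vertices + #bounded edges.\<close>
definition genus :: "ttype \<Rightarrow> int" where
  "genus T = 1 - int (tnv T) + int (length (tedges T))"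

definition balanced :: "int \<Rightarrow> ttype \<Rightarrow> bool" where
  "balanced \<delta> T \<longleftrightarrow> (\<forall>v < tnv T.
     sum_list (map fst (out_slopes \<delta> T v)) = 0 \<and> sum_list (map snd (out_slopes \<delta> T v)) = 0)"

definition trivalent :: "int \<Rightarrow> ttype \<Rightarrow> bool" where
  "trivalent \<delta> T \<longleftrightarrow> (\<forall>v < tnv T. length (out_slopes \<delta> T v) = 3)"

text \<open>h is an immersion (locally injective): no edge is contracted and at every vertex
no two outgoing edge germs point in the same direction.\<close>
definition immersive :: "int \<Rightarrow> ttype \<Rightarrow> bool" where
  "immersive \<delta> T \<longleftrightarrow>
     (\<forall>(u, w, s, k) \<in> set (tedges T). s \<noteq> (0, 0)) \<and>
     (\<forall>(u, c) \<in> set (tends T). c \<noteq> 0) \<and>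
     (\<forall>v < tnv T. \<forall>i < length (out_slopes \<delta> T v). \<forall>j < length (out_slopes \<delta> T v).
        i \<noteq> j \<longrightarrow> \<not> same_direction (out_slopes \<delta> T v ! i) (out_slopes \<delta> T v ! j))"

definition end_weights :: "ttype \<Rightarrow> nat multiset" where
  "end_weights T = mset (map (\<lambda>(u, c). nat \<bar>c\<bar>) (tends T))"

definition simple_type :: "int \<Rightarrow> nat \<Rightarrow> nat \<Rightarrow> real \<Rightarrow> nat multiset \<Rightarrow> ttype \<Rightarrow> bool" where
  "simple_type \<delta> g n b \<mu> T \<longleftrightarrow>
     well_formed T \<and> balanced \<delta> T \<and> trivalent \<delta> T \<and> immersive \<delta> T \<and>
     genus T = int g \<and> length (tmarks T) = n \<and>
     real (\<Sum>(u, c) \<leftarrow> tends T. nat \<bar>c\<bar>) = 2 * b \<and>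
     end_weights T = \<mu>"

text \<open>Coordinates of a parameter point X: lift of vertex v is (X(2v), X(2v+1));
length of bounded edge e is X(2 tnv + e); position of marked point j (distance from the
first vertex of its edge) is X(2 tnv + #edges + j); all other coordinates are 0.\<close>

definition vpos :: "ttype \<Rightarrow> (nat \<Rightarrow> real) \<Rightarrow> nat \<Rightarrow> real \<times> real" where
  "vpos T X v = (X (2 * v), X (2 * v + 1))"

definition elen :: "ttype \<Rightarrow> (nat \<Rightarrow> real) \<Rightarrow> nat \<Rightarrow> real" where
  "elen T X e = X (2 * tnv T + e)"

definition mpos :: "ttype \<Rightarrow> (nat \<Rightarrow> real) \<Rightarrow> nat \<Rightarrow> real" where
  "mpos T X j = X (2 * tnv T + length (tedges T) + j)"

definition ncoord :: "ttype \<Rightarrow> nat" where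
  "ncoord T = 2 * tnv T + length (tedges T) + length (tmarks T)"

text \<open>Tropical intersection number with the fiber over x = c (for c generic, i.e. not the
x-coordinate of the image of a vertex): each crossing of an edge of slope s with the fiber
contributes |det(s,(0,1))| = |s_1|.\<close>
definition fiber_intersection :: "real \<Rightarrow> ttype \<Rightarrow> (nat \<Rightarrow> real) \<Rightarrow> real \<Rightarrow> real" where
  "fiber_intersection l T X c =
     (\<Sum>e < length (tedges T).
        (case tedges T ! e of (u, w, s, k) \<Rightarrow>
          of_int \<bar>fst s\<bar> * real (card {m::int.
             c + of_int m * l \<in> {min (fst (vpos T X u)) (fst (vpos T X u) + elen T X e * of_int (fst s))
                              <..< max (fst (vpos T X u)) (fst (vpos T X u) + elen T X e * of_int (fst s))}})))"

definition cell :: "int \<Rightarrow> real \<Rightarrow> real \<Rightarrow> ttype \<Rightarrow> (nat \<Rightarrow> real) set" where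
  "cell \<delta> l a T = {X.
     (\<forall>i. ncoord T \<le> i \<longrightarrow> X i = 0) \<and>
     (\<forall>e < length (tedges T). case tedges T ! e of (u, w, s, k) \<Rightarrow>
        0 < elen T X e \<and>
        (fst (vpos T X u) + elen T X e * of_int (fst s),
         snd (vpos T X u) + elen T X e * of_int (snd s)) = phi_pow \<delta> l k (vpos T X w)) \<and>
     (\<forall>j < length (tmarks T). case tmarks T ! j of (bd, e) \<Rightarrow>
        0 \<le> mpos T X j \<and> (bd \<longrightarrow> mpos T X j \<le> elen T X e)) \<and>
     (\<forall>c. (\<forall>v < tnv T. \<forall>m::int. c \<noteq> fst (vpos T X v) + of_int m * l) \<longrightarrow>
        fiber_intersection l T X c = 2 * a)}"

definition simple_locus_nonempty ::
  "int \<Rightarrow> real \<Rightarrow> nat \<Rightarrow> nat \<Rightarrow> real \<Rightarrow> real \<Rightarrow> nat multiset \<Rightarrow> bool" where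
  "simple_locus_nonempty \<delta> l g n a b \<mu> \<longleftrightarrow>
     (\<exists>T. simple_type \<delta> g n b \<mu> T \<and> cell \<delta> l a T \<noteq> {})"

definition simple_locus_has_dim ::
  "int \<Rightarrow> real \<Rightarrow> nat \<Rightarrow> nat \<Rightarrow> real \<Rightarrow> real \<Rightarrow> nat multiset \<Rightarrow> nat \<Rightarrow> bool" where
  "simple_locus_has_dim \<delta> l g n a b \<mu> d \<longleftrightarrow>
     (\<exists>T. simple_type \<delta> g n b \<mu> T \<and> has_aff_dim (cell \<delta> l a T) d) \<and>
     (\<forall>T d'. simple_type \<delta> g n b \<mu> T \<and> has_aff_dim (cell \<delta> l a T) d' \<longrightarrow> d' \<le> d)"

end

theory Submission
  imports Defs "HOL-Library.Function_Algebras"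
begin

text \<open>A cell of a simple combinatorial type lives in the space of vertex lifts, edge lengths and
  marked-point positions, of dimension 2V + E + n. Inside it the cell is cut out by the 2E linear
  edge equations P_u + L s = phi^k(P_w), by strict inequalities, and by the condition on the fiber
  degree. The fiber degree is constant on solutions of the edge equations: it differs from
  the sum of s_1 k over the edges by a coboundary paired with the horizontal slopes, which
  vanishes by balancing. The edge equations are independent: a linear relation among them is a
  covector on every edge, orthogonal to its slope and balanced at every vertex; at a trivalent
  vertex whose edge germs pairwise point in different directions these covectors all vanish as
  soon as one does, and at the vertex of an end one does, so by connectedness all vanish. Hence
  a nonempty cell is relatively open in an affine space of dimension 2V + E + n - 2E, and
  3V = 2E + |mu| together with g = 1 - V + E turns this into |mu| + g - 1 + n.\<close>

section \<open>Finite families of finitely supported vectors\<close>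

definition supported_below :: "nat \<Rightarrow> (nat \<Rightarrow> real) \<Rightarrow> bool" where
  "supported_below N x \<longleftrightarrow> (\<forall>j\<ge>N. x j = 0)"

definition lin_indep_fam :: "(nat \<Rightarrow> nat \<Rightarrow> real) \<Rightarrow> nat \<Rightarrow> bool" where
  "lin_indep_fam b k \<longleftrightarrow> (\<forall>c. (\<forall>j. (\<Sum>i<k. c i * b i j) = 0) \<longrightarrow> (\<forall>i<k. c i = 0))"

definition dot :: "nat \<Rightarrow> (nat \<Rightarrow> real) \<Rightarrow> (nat \<Rightarrow> real) \<Rightarrow> real" where
  "dot N f x = (\<Sum>j<N. f j * x j)"

definition unit_vec :: "nat \<Rightarrow> nat \<Rightarrow> real" where
  "unit_vec q = (\<lambda>j. if j = q then 1 else 0)"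

definition affine_solutions ::
  "nat \<Rightarrow> (nat \<Rightarrow> nat \<Rightarrow> real) \<Rightarrow> nat \<Rightarrow> (nat \<Rightarrow> real) \<Rightarrow> (nat \<Rightarrow> real) set" where
  "affine_solutions N r m c = {X. supported_below N X \<and> (\<forall>q<m. dot N (r q) X = c q)}"

lemma supported_below_mono: "supported_below M x \<Longrightarrow> M \<le> N \<Longrightarrow> supported_below N x"
  by (simp add: supported_below_def)

lemma dot_add_scaled: "dot N f (\<lambda>j. x j + t * y j) = dot N f x + t * dot N f y"
  by (simp add: dot_def algebra_simps sum.distrib sum_distrib_left)

lemma dot_diff_scaled: "dot N f (\<lambda>j. x j - t * y j) = dot N f x - t * dot N f y"
  by (simp add: dot_def algebra_simps sum_subtractf sum_distrib_left)

lemma dot_add: "dot N (\<lambda>j. f j + g j) x = dot N f x + dot N g x"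
  by (simp add: dot_def sum.distrib algebra_simps)

lemma dot_diff: "dot N (\<lambda>j. f j - g j) x = dot N f x - dot N g x"
  by (simp add: dot_def sum_subtractf algebra_simps)

lemma dot_scale: "dot N (\<lambda>j. a * f j) x = a * dot N f x"
  by (simp add: dot_def sum_distrib_left algebra_simps)

lemma dot_sum_left: "dot N (\<lambda>j. \<Sum>i\<in>I. c i * g i j) x = (\<Sum>i\<in>I. c i * dot N (g i) x)"
  unfolding dot_def by (simp add: sum_distrib_left sum_distrib_right sum.swap[of _ I] algebra_simps)

lemma dot_sum_right: "dot N f (\<lambda>j. \<Sum>i\<in>I. c i * g i j) = (\<Sum>i\<in>I. c i * dot N f (g i))"
  unfolding dot_def by (simp add: sum_distrib_left sum.swap[of _ I] algebra_simps)

lemma dot_unit_vec: "dot N (unit_vec q) x = (if q < N then x q else 0)"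
proof -
  have "(\<lambda>j. unit_vec q j * x j) = (\<lambda>j. if q = j then x q else 0)"
    by (auto simp: unit_vec_def)
  then show ?thesis unfolding dot_def by (simp only:) (simp add: sum.delta)
qed

lemma lin_indep_fam_mono:
  assumes "lin_indep_fam b k" "k' \<le> k"
  shows "lin_indep_fam b k'"
  unfolding lin_indep_fam_def
proof (intro allI impI)
  fix c i assume h: "\<forall>j. (\<Sum>i<k'. c i * b i j) = 0" and i: "i < k'"
  define c' where "c' = (\<lambda>i. if i < k' then c i else 0)"
  have "(\<Sum>i<k. c' i * b i j) = (\<Sum>i<k'. c i * b i j)" for j
    by (rule sum.mono_neutral_cong_right) (use assms(2) in \<open>auto simp: c'_def\<close>)
  then have "c' i = 0" using assms h i unfolding lin_indep_fam_def by (metis order_less_le_trans)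
  then show "c i = 0" using i by (simp add: c'_def)
qed

lemma lin_indep_fam_inj_on:
  assumes "lin_indep_fam b k"
  shows "inj_on b {..<k}"
proof (rule inj_onI, rule ccontr)
  fix x y assume xy: "x \<in> {..<k}" "y \<in> {..<k}" "b x = b y" "x \<noteq> y"
  define c where "c = (\<lambda>i. if i = x then (1::real) else if i = y then -1 else 0)"
  have "(\<Sum>i<k. c i * b i j) = (\<Sum>i\<in>{x,y}. c i * b i j)" for j
    by (rule sum.mono_neutral_right) (use xy in \<open>auto simp: c_def\<close>)
  also have "(\<Sum>i\<in>{x,y}. c i * b i j) = 0" for j
    using xy by (simp add: c_def)
  finally have "c x = 0" using assms xy(1) unfolding lin_indep_fam_def by blast
  then show False by (simp add: c_def)
qed

lemma lin_indep_fam_unit_vec: "lin_indep_fam unit_vec N"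
  unfolding lin_indep_fam_def
proof (intro allI impI)
  fix c i assume "\<forall>j. (\<Sum>q<N. c q * unit_vec q j) = 0" and "i < N"
  moreover have "(\<Sum>q<N. c q * unit_vec q i) = c i"
    using \<open>i < N\<close> by (simp add: unit_vec_def if_distrib cong: if_cong)
  ultimately show "c i = 0" by simp
qed

lemma sum_fun_apply: "(\<Sum>i\<in>A. f i) j = (\<Sum>i\<in>A. f i j :: real)"
  by (induction A rule: infinite_finite_induct) auto

interpretation FV: vector_space "\<lambda>(c::real) (f::nat\<Rightarrow>real) i. c * f i"
  by unfold_locales (auto simp: fun_eq_iff algebra_simps)

lemma supported_below_in_span:
  assumes "supported_below N x"
  shows "x \<in> FV.span (unit_vec ` {..<N})"
proof -
  have "x = (\<Sum>q<N. (\<lambda>i. x q * unit_vec q i))"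
    using assms by (auto simp: fun_eq_iff sum_fun_apply unit_vec_def supported_below_def
        if_distrib not_less cong: if_cong)
  also have "\<dots> \<in> FV.span (unit_vec ` {..<N})"
    by (intro FV.span_sum FV.span_scale FV.span_base) auto
  finally show ?thesis .
qed

lemma lin_indep_fam_supported_le:
  assumes indep: "lin_indep_fam z k" and supp: "\<forall>i<k. supported_below N (z i)"
  shows "k \<le> N"
proof -
  have inj: "inj_on z {..<k}" by (rule lin_indep_fam_inj_on[OF indep])
  have "FV.independent (z ` {..<k})"
  proof
    assume "FV.dependent (z ` {..<k})"
    then obtain u where u: "\<exists>v\<in>z ` {..<k}. u v \<noteq> 0"
        "(\<Sum>v\<in>z ` {..<k}. (\<lambda>i. u v * v i)) = 0"
      using FV.dependent_finite[of "z ` {..<k}"] by auto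
    from u(2) have "\<forall>j. (\<Sum>q<k. u (z q) * z q j) = 0"
      by (simp add: fun_eq_iff sum_fun_apply sum.reindex[OF inj])
    then have "\<forall>q<k. u (z q) = 0"
      using indep unfolding lin_indep_fam_def by (elim allE[of _ "\<lambda>q. u (z q)"]) simp
    with u(1) show False by auto
  qed
  moreover have "z ` {..<k} \<subseteq> FV.span (unit_vec ` {..<N})"
    using supp supported_below_in_span by blast
  ultimately have "card (z ` {..<k}) \<le> card (unit_vec ` {..<N})"
    using FV.independent_span_bound by blast
  also have "\<dots> \<le> N" using card_image_le[of "{..<N}" unit_vec] by simp
  finally show ?thesis using card_image[OF inj] by simp
qed

lemma lin_indep_fam_eliminate:
  fixes b :: "nat \<Rightarrow> nat \<Rightarrow> real" and f :: "(nat \<Rightarrow> real) \<Rightarrow> real"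
  assumes indep: "lin_indep_fam b k" and p: "p < k" and fp: "f (b p) \<noteq> 0"
  defines "\<tau> \<equiv> \<lambda>i. if i = p then k - 1 else i"
  shows "lin_indep_fam (\<lambda>i j. b (\<tau> i) j - f (b (\<tau> i)) / f (b p) * b p j) (k - 1)"
  unfolding lin_indep_fam_def
proof (intro allI impI)
  fix c i
  assume h: "\<forall>j. (\<Sum>i<k-1. c i * (b (\<tau> i) j - f (b (\<tau> i)) / f (b p) * b p j)) = 0"
    and i: "i < k - 1"
  have bij: "bij_betw \<tau> {..<k-1} ({..<k} - {p})"
    by (rule bij_betw_imageI) (use p in \<open>auto simp: \<tau>_def inj_on_def image_def split: if_splits\<close>)
  then obtain \<sigma> where \<sigma>: "\<forall>i<k-1. \<sigma> (\<tau> i) = i"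
    by (metis bij_betw_imp_inj_on inv_into_f_f lessThan_iff)
  define C where "C = (\<lambda>q. if q = p then - (\<Sum>i<k-1. c i * f (b (\<tau> i)) / f (b p)) else c (\<sigma> q))"
  have \<tau>p: "\<tau> i \<noteq> p" if "i < k - 1" for i using that p by (auto simp: \<tau>_def)
  have "(\<Sum>q<k. C q * b q j) = 0" for j
  proof -
    have "(\<Sum>q<k. C q * b q j) = C p * b p j + (\<Sum>q\<in>{..<k} - {p}. C q * b q j)"
      using p by (subst sum.remove[of _ p]) auto
    also have "(\<Sum>q\<in>{..<k} - {p}. C q * b q j) = (\<Sum>i<k-1. c i * b (\<tau> i) j)"
      by (subst sum.reindex_bij_betw[OF bij, symmetric]) (auto simp: C_def \<sigma> \<tau>p intro: sum.cong)
    also have "C p * b p j + (\<Sum>i<k-1. c i * b (\<tau> i) j)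
        = (\<Sum>i<k-1. c i * (b (\<tau> i) j - f (b (\<tau> i)) / f (b p) * b p j))"
      by (simp add: C_def sum_distrib_right sum_subtractf right_diff_distrib mult.assoc)
    finally show ?thesis using h by simp
  qed
  then have "C (\<tau> i) = 0"
    using indep i p unfolding lin_indep_fam_def by (auto simp: \<tau>_def)
  then show "c i = 0" using \<sigma> \<tau>p i by (simp add: C_def)
qed

text \<open>Gaussian elimination: each further constraint is imposed by eliminating it against a member
  of the family on which it does not vanish.\<close>

lemma exists_lin_indep_fam_orthogonal:
  "\<exists>b. lin_indep_fam b (N - m) \<and> (\<forall>i<N-m. supported_below N (b i)) \<and>
       (\<forall>i<N-m. \<forall>q<m. dot N (r q) (b i) = 0)"
proof (induction m)
  case 0
  have "\<forall>i<N. supported_below N (unit_vec i)" by (simp add: supported_below_def unit_vec_def)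
  then show ?case using lin_indep_fam_unit_vec by auto
next
  case (Suc m)
  then obtain b where b: "lin_indep_fam b (N - m)" "\<forall>i<N-m. supported_below N (b i)"
    "\<forall>i<N-m. \<forall>q<m. dot N (r q) (b i) = 0" by blast
  let ?f = "dot N (r m)"
  show ?case
  proof (cases "\<forall>i<N-m. ?f (b i) = 0")
    case True
    then show ?thesis
      using b lin_indep_fam_mono[OF b(1)] by (intro exI[of _ b]) (auto simp: less_Suc_eq)
  next
    case False
    then obtain p where p: "p < N - m" "?f (b p) \<noteq> 0" by blast
    define \<tau> where "\<tau> = (\<lambda>i. if i = p then N - m - 1 else i)"
    define b' where "b' = (\<lambda>i j. b (\<tau> i) j - ?f (b (\<tau> i)) / ?f (b p) * b p j)"
    have \<tau>: "\<tau> i < N - m" if "i < N - m - 1" for i using that p by (auto simp: \<tau>_def)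
    have "lin_indep_fam b' (N - Suc m)"
      using lin_indep_fam_eliminate[where f="?f", OF b(1) p] by (simp add: b'_def \<tau>_def)
    moreover have "\<forall>i<N - Suc m. supported_below N (b' i)"
      using b(2) \<tau> p by (simp add: b'_def supported_below_def)
    moreover have "dot N (r q) (b' i) = 0" if "i < N - Suc m" "q < Suc m" for i q
      using b(3) \<tau>[of i] p that unfolding b'_def dot_diff_scaled by (cases "q = m") auto
    ultimately show ?thesis by blast
  qed
qed

lemma sum_lessThan_add: "(\<Sum>i<m + k. f i) = (\<Sum>i<m. f i) + (\<Sum>i<k. f (m + i) :: real)" for k :: nat
  by (induction k) (auto simp: add.assoc)

text \<open>A relation rho + psi = 0 with rho in the span of r and psi orthogonal to it gives
  dot rho rho = - dot rho psi = 0.\<close>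

lemma lin_indep_fam_append_orthogonal:
  assumes r: "lin_indep_fam r m" and y: "lin_indep_fam y k"
    and supp: "\<forall>q<m. supported_below N (r q)"
    and orth: "\<forall>q<m. \<forall>i<k. dot N (r q) (y i) = 0"
  shows "lin_indep_fam (\<lambda>i. if i < m then r i else y (i - m)) (m + k)"
  unfolding lin_indep_fam_def
proof (intro allI impI)
  fix c i
  assume H: "\<forall>j. (\<Sum>i<m + k. c i * (if i < m then r i else y (i - m)) j) = 0" and i: "i < m + k"
  define \<rho> where "\<rho> = (\<lambda>j. \<Sum>q<m. c q * r q j)"
  define \<psi> where "\<psi> = (\<lambda>j. \<Sum>i<k. c (m + i) * y i j)"
  have split: "(\<Sum>i<m + k. c i * (if i < m then r i else y (i - m)) j) = \<rho> j + \<psi> j" for j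
    by (simp add: sum_lessThan_add \<rho>_def \<psi>_def)
  have "dot N \<rho> \<psi> = (\<Sum>q<m. c q * (\<Sum>i<k. c (m + i) * dot N (r q) (y i)))"
    unfolding \<rho>_def \<psi>_def dot_sum_left dot_sum_right ..
  also have "\<dots> = 0" using orth by simp
  finally have "(\<Sum>j<N. \<rho> j * \<rho> j) = 0"
    using H split by (simp add: dot_def eq_neg_iff_add_eq_0[symmetric] sum_negf)
  then have "\<rho> j = 0" if "j < N" for j
    using that sum_nonneg_eq_0_iff[of "{..<N}" "\<lambda>j. \<rho> j * \<rho> j"] by simp
  moreover have "\<rho> j = 0" if "N \<le> j" for j
    using supp that by (simp add: \<rho>_def supported_below_def)
  ultimately have \<rho>0: "\<forall>j. \<rho> j = 0" by (meson not_le)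
  then have cr: "\<forall>q<m. c q = 0" using r unfolding lin_indep_fam_def \<rho>_def by blast
  have cy: "\<forall>i<k. c (m + i) = 0"
    using y H split \<rho>0 unfolding lin_indep_fam_def \<psi>_def by (elim allE[of _ "\<lambda>i. c (m + i)"]) simp
  show "c i = 0"
  proof (cases "i < m")
    case False
    then have "i = m + (i - m)" "i - m < k" using i by auto
    then show ?thesis using cy by metis
  qed (use cr in auto)
qed

lemma aff_indep_fam_iff_lin_indep_fam:
  "aff_indep_fam x d \<longleftrightarrow> lin_indep_fam (\<lambda>i j. x (Suc i) j - x 0 j) d"
proof -
  have shift: "(\<Sum>i\<in>{1..d}. c i * (x i j - x 0 j)) = (\<Sum>i<d. c (Suc i) * (x (Suc i) j - x 0 j))"
    for c j by (simp add: sum.atLeast1_atMost_eq)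
  show ?thesis
    unfolding aff_indep_fam_def lin_indep_fam_def shift
  proof safe
    fix c i assume "\<forall>c. (\<forall>j. (\<Sum>i<d. c (Suc i) * (x (Suc i) j - x 0 j)) = 0) \<longrightarrow> (\<forall>i\<in>{1..d}. c i = 0)"
      and "\<forall>j. (\<Sum>i<d. c i * (x (Suc i) j - x 0 j)) = 0" and "i < d"
    then have "\<forall>i\<in>{1..d}. c (i - 1) = 0" by (elim allE[of _ "\<lambda>i. c (i - 1)"]) simp
    then show "c i = 0" using \<open>i < d\<close> by (elim ballE[of _ _ "Suc i"]) auto
  next
    fix c i assume "\<forall>c. (\<forall>j. (\<Sum>i<d. c i * (x (Suc i) j - x 0 j)) = 0) \<longrightarrow> (\<forall>i<d. c i = 0)"
      and "\<forall>j. (\<Sum>i<d. c (Suc i) * (x (Suc i) j - x 0 j)) = 0" and "i \<in> {1..d}"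
    then show "c i = 0" by (elim allE[of _ "\<lambda>i. c (Suc i)"]) (auto dest: spec[of _ "i - 1"])
  qed
qed

lemma has_aff_dim_nonempty: "has_aff_dim S d \<Longrightarrow> S \<noteq> {}"
  unfolding has_aff_dim_def by blast

lemma has_aff_dim_unique:
  assumes "has_aff_dim S d" and "has_aff_dim S d'"
  shows "d' = d"
proof -
  have le: "k' \<le> k" if Sk: "has_aff_dim S k" and Sk': "has_aff_dim S k'" for k k'
  proof (rule ccontr)
    assume "\<not> k' \<le> k"
    obtain x where x: "\<forall>i\<le>k'. x i \<in> S" "aff_indep_fam x k'"
      using Sk' unfolding has_aff_dim_def by blast
    then have "aff_indep_fam x (Suc k)"
      using lin_indep_fam_mono[of _ k' "Suc k"] \<open>\<not> k' \<le> k\<close> by (simp add: aff_indep_fam_iff_lin_indep_fam)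
    moreover have "\<forall>i\<le>Suc k. x i \<in> S" using x(1) \<open>\<not> k' \<le> k\<close> by simp
    ultimately show False using Sk unfolding has_aff_dim_def by blast
  qed
  show ?thesis using le[OF assms] le[OF assms(2,1)] by simp
qed

lemma aff_indep_fam_in_affine_solutions_le:
  assumes r: "lin_indep_fam r m" and supp: "\<forall>q<m. supported_below N (r q)"
    and x: "\<forall>i\<le>k. x i \<in> affine_solutions N r m c" and indep: "aff_indep_fam x k"
  shows "m + k \<le> N"
proof -
  let ?y = "\<lambda>i j. x (Suc i) j - x 0 j"
  have "dot N (r q) (?y i) = 0" if "q < m" "i < k" for q i
    using x that dot_diff_scaled[of N "r q" "x (Suc i)" 1 "x 0"] by (simp add: affine_solutions_def)
  then have "lin_indep_fam (\<lambda>i. if i < m then r i else ?y (i - m)) (m + k)"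
    using lin_indep_fam_append_orthogonal[OF r _ supp, of ?y k] indep
    by (simp add: aff_indep_fam_iff_lin_indep_fam)
  moreover have "supported_below N (?y i)" if "i < k" for i
    using x that by (simp add: affine_solutions_def supported_below_def)
  ultimately show ?thesis
    using supp by (elim lin_indep_fam_supported_le) simp
qed

lemma exists_aff_indep_fam_near:
  assumes X: "X \<in> S"
    and near: "\<forall>y. supported_below N y \<and> (\<forall>q<m. dot N (r q) y = 0) \<longrightarrow>
                 (\<exists>t>0. (\<lambda>j. X j + t * y j) \<in> S)"
  shows "\<exists>x. (\<forall>i\<le>N - m. x i \<in> S) \<and> aff_indep_fam x (N - m)"
proof -
  obtain b where b: "lin_indep_fam b (N - m)" "\<forall>i<N-m. supported_below N (b i)"
      "\<forall>i<N-m. \<forall>q<m. dot N (r q) (b i) = 0"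
    using exists_lin_indep_fam_orthogonal by blast
  have "\<forall>i\<in>{..<N-m}. \<exists>t. t > 0 \<and> (\<lambda>j. X j + t * b i j) \<in> S"
    using near b(2,3) by blast
  then obtain t where t: "\<forall>i\<in>{..<N-m}. t i > 0 \<and> (\<lambda>j. X j + t i * b i j) \<in> S"
    by (metis bchoice)
  define x where "x = (\<lambda>i j. if i = 0 then X j else X j + t (i - 1) * b (i - 1) j)"
  have x: "x i \<in> S" if "i \<le> N - m" for i
  proof (cases i)
    case 0 then show ?thesis using X by (simp add: x_def)
  next
    case (Suc i') then show ?thesis using t that by (simp add: x_def)
  qed
  have "lin_indep_fam (\<lambda>i j. t i * b i j) (N - m)"
    unfolding lin_indep_fam_def
  proof (intro allI impI)
    fix c i assume "\<forall>j. (\<Sum>i<N - m. c i * (t i * b i j)) = 0" and i: "i < N - m"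
    then have "\<forall>j. (\<Sum>i<N - m. (c i * t i) * b i j) = 0" by (simp add: mult.assoc)
    then have "c i * t i = 0"
      using b(1) i unfolding lin_indep_fam_def by (elim allE[of _ "\<lambda>i. c i * t i"]) simp
    moreover have "t i > 0" using t i by simp
    ultimately show "c i = 0" by simp
  qed
  moreover have "(\<lambda>i j. x (Suc i) j - x 0 j) = (\<lambda>i j. t i * b i j)"
    by (simp add: x_def)
  ultimately have "aff_indep_fam x (N - m)"
    by (simp add: aff_indep_fam_iff_lin_indep_fam)
  with x show ?thesis by blast
qed

lemma has_aff_dim_open_in_affine_solutions:
  assumes r: "lin_indep_fam r m" and supp: "\<forall>q<m. supported_below N (r q)"
    and S: "S \<subseteq> affine_solutions N r m c" and X: "X \<in> S"
    and near: "\<forall>y. supported_below N y \<and> (\<forall>q<m. dot N (r q) y = 0) \<longrightarrow>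
                 (\<exists>t>0. (\<lambda>j. X j + t * y j) \<in> S)"
  shows "has_aff_dim S (N - m)"
proof -
  have upper: "\<not> (\<exists>x. (\<forall>i\<le>Suc (N - m). x i \<in> S) \<and> aff_indep_fam x (Suc (N - m)))"
  proof
    assume "\<exists>x. (\<forall>i\<le>Suc (N - m). x i \<in> S) \<and> aff_indep_fam x (Suc (N - m))"
    then obtain x where x: "\<forall>i\<le>Suc (N - m). x i \<in> S" "aff_indep_fam x (Suc (N - m))" by blast
    then have "\<forall>i\<le>Suc (N - m). x i \<in> affine_solutions N r m c" using S by blast
    from aff_indep_fam_in_affine_solutions_le[OF r supp this x(2)]
    show False using lin_indep_fam_supported_le[OF r supp] by simp
  qed
  show ?thesis
    unfolding has_aff_dim_def using exists_aff_indep_fam_near[OF X near] upper by blast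
qed

section \<open>The edge equations of a combinatorial type\<close>

lemma funpow_phi:
  "(phi \<delta> l ^^ n) (x, y) =
     (x + real n * l, (if even n then y else of_int \<delta> * x - y) + real (n div 2) * of_int \<delta> * l)"
proof (induction n)
  case (Suc n)
  then show ?case
    by (cases "even n") (auto simp: phi_def algebra_simps elim!: evenE oddE)
qed simp

lemma funpow_phi_inv:
  "(phi_inv \<delta> l ^^ n) (x, y) =
     (x - real n * l, (if even n then y else of_int \<delta> * x - y) - real ((n + 1) div 2) * of_int \<delta> * l)"
proof (induction n)
  case (Suc n)
  then show ?case
    by (cases "even n") (auto simp: phi_inv_def algebra_simps elim!: evenE oddE)
qed simp

lemma phi_pow_Pair:
  "phi_pow \<delta> l k (x, y) =
     (x + of_int k * l, (if even k then y else of_int \<delta> * x - y) + of_int (k div 2) * of_int \<delta> * l)"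
proof (cases "0 \<le> k")
  case True
  then obtain n where n: "k = int n" using nonneg_int_cases by blast
  have "int n div 2 = int (n div 2)" by simp
  then show ?thesis using True by (simp add: phi_pow_def funpow_phi n)
next
  case False
  then obtain n where n: "k = - int n" by (intro that[of "nat (- k)"]) simp
  have "(- int n) div 2 = - int ((n + 1) div 2)"
    by (cases "even n") (auto elim!: evenE oddE)
  then show ?thesis using False by (simp add: phi_pow_def funpow_phi_inv n)
qed

definition edge_src :: "ttype \<Rightarrow> nat \<Rightarrow> nat" where
  "edge_src T e = fst (tedges T ! e)"

definition edge_tgt :: "ttype \<Rightarrow> nat \<Rightarrow> nat" where
  "edge_tgt T e = fst (snd (tedges T ! e))"

definition edge_slope :: "ttype \<Rightarrow> nat \<Rightarrow> int \<times> int" where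
  "edge_slope T e = fst (snd (snd (tedges T ! e)))"

definition edge_twist :: "ttype \<Rightarrow> nat \<Rightarrow> int" where
  "edge_twist T e = snd (snd (snd (tedges T ! e)))"

lemma tedges_nth: "tedges T ! e = (edge_src T e, edge_tgt T e, edge_slope T e, edge_twist T e)"
  by (simp add: edge_src_def edge_tgt_def edge_slope_def edge_twist_def)

lemma edge_vertices_less:
  assumes "well_formed T" and "e < length (tedges T)"
  shows "edge_src T e < tnv T" and "edge_tgt T e < tnv T"
  using assms nth_mem[of e "tedges T"] tedges_nth[of T e] unfolding well_formed_def by fastforce+

definition edges_realized :: "int \<Rightarrow> real \<Rightarrow> ttype \<Rightarrow> (nat \<Rightarrow> real) \<Rightarrow> bool" where
  "edges_realized \<delta> l T X \<longleftrightarrow> (\<forall>e < length (tedges T). case tedges T ! e of (u, w, s, k) \<Rightarrow>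
     0 < elen T X e \<and>
     (fst (vpos T X u) + elen T X e * of_int (fst s),
      snd (vpos T X u) + elen T X e * of_int (snd s)) = phi_pow \<delta> l k (vpos T X w))"

definition marks_on_edges :: "ttype \<Rightarrow> (nat \<Rightarrow> real) \<Rightarrow> bool" where
  "marks_on_edges T X \<longleftrightarrow> (\<forall>j < length (tmarks T). case tmarks T ! j of (bd, e) \<Rightarrow>
     0 \<le> mpos T X j \<and> (bd \<longrightarrow> mpos T X j \<le> elen T X e))"

definition generic_fiber_degree :: "real \<Rightarrow> real \<Rightarrow> ttype \<Rightarrow> (nat \<Rightarrow> real) \<Rightarrow> bool" where
  "generic_fiber_degree l a T X \<longleftrightarrow> (\<forall>c. (\<forall>v < tnv T. \<forall>m::int. c \<noteq> fst (vpos T X v) + of_int m * l) \<longrightarrow>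
     fiber_intersection l T X c = 2 * a)"

lemma mem_cell_iff:
  "X \<in> cell \<delta> l a T \<longleftrightarrow>
     supported_below (ncoord T) X \<and> edges_realized \<delta> l T X \<and> marks_on_edges T X \<and>
     generic_fiber_degree l a T X"
  by (simp add: cell_def supported_below_def edges_realized_def marks_on_edges_def
      generic_fiber_degree_def)

text \<open>Rows 2e and 2e+1 are the two coordinates of the equation P_u + L s = phi^k(P_w) of edge e,
  which is linear in the coordinates by the closed form of phi^k.\<close>

definition edge_row_x :: "ttype \<Rightarrow> nat \<Rightarrow> nat \<Rightarrow> real" where
  "edge_row_x T e = (\<lambda>j. unit_vec (2 * edge_src T e) j
      + of_int (fst (edge_slope T e)) * unit_vec (2 * tnv T + e) j - unit_vec (2 * edge_tgt T e) j)"

definition edge_row_y :: "int \<Rightarrow> ttype \<Rightarrow> nat \<Rightarrow> nat \<Rightarrow> real" where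
  "edge_row_y \<delta> T e = (\<lambda>j. unit_vec (2 * edge_src T e + 1) j
      + of_int (snd (edge_slope T e)) * unit_vec (2 * tnv T + e) j
      - (if even (edge_twist T e) then unit_vec (2 * edge_tgt T e + 1) j
         else of_int \<delta> * unit_vec (2 * edge_tgt T e) j - unit_vec (2 * edge_tgt T e + 1) j))"

definition edge_row :: "int \<Rightarrow> ttype \<Rightarrow> nat \<Rightarrow> nat \<Rightarrow> real" where
  "edge_row \<delta> T q = (if even q then edge_row_x T (q div 2) else edge_row_y \<delta> T (q div 2))"

definition edge_rhs :: "int \<Rightarrow> real \<Rightarrow> ttype \<Rightarrow> nat \<Rightarrow> real" where
  "edge_rhs \<delta> l T q = (if even q then of_int (edge_twist T (q div 2)) * l
     else of_int (edge_twist T (q div 2) div 2) * of_int \<delta> * l)"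

lemma edge_row_supported:
  assumes "well_formed T" and "q < 2 * length (tedges T)"
  shows "supported_below (2 * tnv T + length (tedges T)) (edge_row \<delta> T q)"
proof -
  have "q div 2 < length (tedges T)" using assms(2) by simp
  with edge_vertices_less[OF assms(1) this] show ?thesis
    by (simp add: supported_below_def edge_row_def edge_row_x_def edge_row_y_def unit_vec_def)
qed

lemma edge_equation_iff_rows:
  assumes wf: "well_formed T" and e: "e < length (tedges T)"
  shows "(fst (vpos T X (edge_src T e)) + elen T X e * of_int (fst (edge_slope T e)),
          snd (vpos T X (edge_src T e)) + elen T X e * of_int (snd (edge_slope T e)))
           = phi_pow \<delta> l (edge_twist T e) (vpos T X (edge_tgt T e))
     \<longleftrightarrow> dot (ncoord T) (edge_row \<delta> T (2 * e)) X = edge_rhs \<delta> l T (2 * e) \<and>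
         dot (ncoord T) (edge_row \<delta> T (2 * e + 1)) X = edge_rhs \<delta> l T (2 * e + 1)"
proof -
  have "2 * edge_src T e + 1 < ncoord T" "2 * edge_tgt T e + 1 < ncoord T" "2 * tnv T + e < ncoord T"
    using edge_vertices_less[OF wf e] e by (auto simp: ncoord_def)
  then show ?thesis
    by (cases "even (edge_twist T e)")
       (simp_all add: edge_row_def edge_rhs_def edge_row_x_def edge_row_y_def dot_add dot_diff dot_scale
         dot_unit_vec vpos_def elen_def phi_pow_Pair algebra_simps)
qed

lemma edges_realized_iff:
  assumes wf: "well_formed T"
  shows "edges_realized \<delta> l T X \<longleftrightarrow>
    (\<forall>e < length (tedges T). 0 < elen T X e) \<and>
    (\<forall>q < 2 * length (tedges T). dot (ncoord T) (edge_row \<delta> T q) X = edge_rhs \<delta> l T q)"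
proof -
  have pairs: "(\<forall>q < 2 * length (tedges T). P q) \<longleftrightarrow>
      (\<forall>e < length (tedges T). P (2 * e) \<and> P (2 * e + 1))" for P
  proof safe
    fix q assume "\<forall>e < length (tedges T). P (2 * e) \<and> P (2 * e + 1)" "q < 2 * length (tedges T)"
    then have "P (2 * (q div 2)) \<and> P (2 * (q div 2) + 1)" by simp
    then show "P q" by (cases "even q") (auto elim!: evenE oddE)
  qed auto
  show ?thesis
    unfolding edges_realized_def pairs tedges_nth prod.case
    using edge_equation_iff_rows[OF wf] by blast
qed

section \<open>The fiber degree\<close>

lemma sum_list_concat_map: "sum_list (concat (map F xs)) = sum_list (map (\<lambda>x. sum_list (F x)) xs)"
  by (induction xs) auto

lemma sum_list_map_nth: "sum_list (map g xs) = (\<Sum>e<length xs. g (xs ! e))"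
  by (simp add: sum_list_sum_nth atLeast0LessThan)

lemma fst_dphi_pow: "fst (dphi_pow \<delta> k s) = fst s"
  by (simp add: dphi_pow_def dphi_def)

lemma sum_fst_out_slopes:
  "sum_list (map fst (out_slopes \<delta> T v)) =
   (\<Sum>e<length (tedges T). (if edge_src T e = v then fst (edge_slope T e) else 0)
                          - (if edge_tgt T e = v then fst (edge_slope T e) else 0))"
proof -
  have "sum_list (map fst (out_slopes \<delta> T v)) = sum_list (map (\<lambda>(u, w, s, k).
      (if u = v then fst s else 0) - (if w = v then fst s else 0)) (tedges T))"
    unfolding out_slopes_def
    by (simp add: map_concat sum_list_concat_map comp_def case_prod_beta,
        intro arg_cong[where f = sum_list] map_cong) (auto simp: fst_dphi_pow)
  then show ?thesis by (simp add: sum_list_map_nth tedges_nth)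
qed

text \<open>Balancing in the x-direction: the first slope coordinates form a flow, so they annihilate
  every coboundary.\<close>

lemma balanced_sum_potential_diff:
  fixes \<phi> :: "nat \<Rightarrow> real"
  assumes wf: "well_formed T" and bal: "balanced \<delta> T"
  shows "(\<Sum>e<length (tedges T). of_int (fst (edge_slope T e)) * (\<phi> (edge_tgt T e) - \<phi> (edge_src T e))) = 0"
proof -
  let ?s = "\<lambda>e. real_of_int (fst (edge_slope T e))"
  have "0 = (\<Sum>v<tnv T. \<phi> v * of_int (sum_list (map fst (out_slopes \<delta> T v))))"
    using bal unfolding balanced_def by simp
  also have "\<dots> = (\<Sum>v<tnv T. \<Sum>e<length (tedges T).
      (if edge_src T e = v then \<phi> v * ?s e else 0) - (if edge_tgt T e = v then \<phi> v * ?s e else 0))"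
    unfolding sum_fst_out_slopes of_int_sum sum_distrib_left
    by (intro sum.cong refl) auto
  also have "\<dots> = (\<Sum>e<length (tedges T). \<Sum>v<tnv T.
      (if edge_src T e = v then \<phi> v * ?s e else 0) - (if edge_tgt T e = v then \<phi> v * ?s e else 0))"
    by (rule sum.swap)
  also have "\<dots> = (\<Sum>e<length (tedges T). \<phi> (edge_src T e) * ?s e - \<phi> (edge_tgt T e) * ?s e)"
    by (intro sum.cong refl) (simp add: sum_subtractf edge_vertices_less[OF wf])
  finally show ?thesis by (simp add: sum_subtractf algebra_simps)
qed

lemma card_translates_in_interval:
  fixes l c \<alpha> \<beta> :: real
  assumes l: "0 < l" and \<beta>: "\<forall>m::int. \<beta> \<noteq> c + of_int m * l"
  shows "card {m::int. c + of_int m * l \<in> {\<alpha><..<\<beta>}} = nat (\<lfloor>(\<beta> - c) / l\<rfloor> - \<lfloor>(\<alpha> - c) / l\<rfloor>)"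
proof -
  have "c + of_int m * l \<in> {\<alpha><..<\<beta>} \<longleftrightarrow> m \<in> {\<lfloor>(\<alpha> - c) / l\<rfloor><..\<lfloor>(\<beta> - c) / l\<rfloor>}" for m
  proof -
    have "\<alpha> < c + of_int m * l \<longleftrightarrow> \<lfloor>(\<alpha> - c) / l\<rfloor> < m"
      using l by (simp add: floor_less_iff field_simps)
    moreover have "c + of_int m * l < \<beta> \<longleftrightarrow> m \<le> \<lfloor>(\<beta> - c) / l\<rfloor>"
      using l \<beta>[rule_format, of m] by (auto simp: le_floor_iff field_simps)
    ultimately show ?thesis by simp
  qed
  then have "{m::int. c + of_int m * l \<in> {\<alpha><..<\<beta>}} = {\<lfloor>(\<alpha> - c) / l\<rfloor><..\<lfloor>(\<beta> - c) / l\<rfloor>}"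
    by blast
  then show ?thesis by simp
qed

lemma edge_fiber_crossings:
  fixes l c p q L :: real and s1 :: int
  assumes l: "0 < l" and L: "0 < L" and q: "q = p + L * of_int s1"
    and p_gen: "\<forall>m::int. p \<noteq> c + of_int m * l" and q_gen: "\<forall>m::int. q \<noteq> c + of_int m * l"
  shows "of_int \<bar>s1\<bar> * real (card {m::int. c + of_int m * l \<in> {min p q<..<max p q}})
       = of_int s1 * of_int (\<lfloor>(q - c) / l\<rfloor> - \<lfloor>(p - c) / l\<rfloor>)"
proof (cases s1 "0::int" rule: linorder_cases)
  case greater
  then have "p < q" using q L by simp
  moreover have "\<lfloor>(p - c) / l\<rfloor> \<le> \<lfloor>(q - c) / l\<rfloor>"
    using \<open>p < q\<close> l by (intro floor_mono divide_right_mono) auto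
  ultimately show ?thesis using greater card_translates_in_interval[OF l q_gen, of p] by simp
next
  case less
  then have "q < p" using q L by (simp add: mult_pos_neg)
  moreover have "\<lfloor>(q - c) / l\<rfloor> \<le> \<lfloor>(p - c) / l\<rfloor>"
    using \<open>q < p\<close> l by (intro floor_mono divide_right_mono) auto
  ultimately show ?thesis using less card_translates_in_interval[OF l p_gen, of q] by (simp add: algebra_simps)
qed simp

lemma fiber_intersection_eq:
  assumes wf: "well_formed T" and bal: "balanced \<delta> T" and l: "0 < l"
    and edges: "edges_realized \<delta> l T X"
    and c: "\<forall>v < tnv T. \<forall>m::int. c \<noteq> fst (vpos T X v) + of_int m * l"
  shows "fiber_intersection l T X c =
    (\<Sum>e<length (tedges T). of_int (fst (edge_slope T e)) * of_int (edge_twist T e))"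
proof -
  define \<phi> where "\<phi> = (\<lambda>v. real_of_int \<lfloor>(X (2 * v) - c) / l\<rfloor>)"
  let ?s = "\<lambda>e. real_of_int (fst (edge_slope T e))"
  have "fiber_intersection l T X c = (\<Sum>e<length (tedges T).
      ?s e * of_int (edge_twist T e) + ?s e * (\<phi> (edge_tgt T e) - \<phi> (edge_src T e)))"
    unfolding fiber_intersection_def
  proof (intro sum.cong refl)
    fix e assume "e \<in> {..<length (tedges T)}"
    then have e: "e < length (tedges T)" by simp
    let ?u = "edge_src T e" and ?w = "edge_tgt T e" and ?k = "edge_twist T e"
    have E: "0 < elen T X e" "X (2 * ?u) + elen T X e * ?s e = X (2 * ?w) + of_int ?k * l"
      using edges e unfolding edges_realized_def
      by (auto simp: tedges_nth vpos_def phi_pow_Pair dest!: spec[of _ e])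
    have gen: "X (2 * v) + of_int m * l \<noteq> c + of_int m' * l" if "v < tnv T" for v m m'
    proof
      assume "X (2 * v) + of_int m * l = c + of_int m' * l"
      then have "c = fst (vpos T X v) + of_int (m - m') * l" by (simp add: vpos_def algebra_simps)
      with c that show False by blast
    qed
    have p_gen: "\<forall>m. X (2 * ?u) \<noteq> c + of_int m * l"
      using gen[of ?u 0] edge_vertices_less[OF wf e] by simp
    have q_gen: "\<forall>m. X (2 * ?u) + elen T X e * ?s e \<noteq> c + of_int m * l"
      using gen[of ?w ?k] edge_vertices_less[OF wf e] E(2) by simp
    have fl: "\<lfloor>(X (2 * ?u) + elen T X e * ?s e - c) / l\<rfloor> = \<lfloor>(X (2 * ?w) - c) / l\<rfloor> + ?k"
    proof -
      have "(X (2 * ?u) + elen T X e * ?s e - c) / l = (X (2 * ?w) - c) / l + of_int ?k"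
        unfolding E(2) using l by (simp add: field_simps)
      then show ?thesis by simp
    qed
    show "(case tedges T ! e of (u, w, s, k) \<Rightarrow>
          of_int \<bar>fst s\<bar> * real (card {m::int.
             c + of_int m * l \<in> {min (fst (vpos T X u)) (fst (vpos T X u) + elen T X e * of_int (fst s))
                              <..< max (fst (vpos T X u)) (fst (vpos T X u) + elen T X e * of_int (fst s))}})) =
          ?s e * of_int ?k + ?s e * (\<phi> ?w - \<phi> ?u)"
      unfolding tedges_nth prod.case vpos_def fst_conv
      using edge_fiber_crossings[OF l E(1) refl p_gen q_gen] fl by (simp add: \<phi>_def algebra_simps)
  qed
  also have "\<dots> = (\<Sum>e<length (tedges T). ?s e * of_int (edge_twist T e))"
    using balanced_sum_potential_diff[OF wf bal, of \<phi>] by (simp add: sum.distrib)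
  finally show ?thesis .
qed

lemma exists_generic_fiber: "\<exists>c. \<forall>v < tnv T. \<forall>m::int. c \<noteq> fst (vpos T X v) + of_int m * l"
proof -
  have "countable ((\<lambda>(v, m). fst (vpos T X v) + of_int m * l) ` ({..<tnv T} \<times> (UNIV :: int set)))"
    by (intro countable_image countable_SIGMA) auto
  then obtain c where "c \<notin> (\<lambda>(v, m). fst (vpos T X v) + of_int m * l) ` ({..<tnv T} \<times> (UNIV :: int set))"
    using uncountable_UNIV_real by (metis UNIV_eq_I countable_subset subsetI)
  then show ?thesis by force
qed

lemma generic_fiber_degree_iff:
  assumes "well_formed T" and "balanced \<delta> T" and "0 < l" and "edges_realized \<delta> l T X"
  shows "generic_fiber_degree l a T X \<longleftrightarrow>
    (\<Sum>e<length (tedges T). of_int (fst (edge_slope T e)) * of_int (edge_twist T e)) = 2 * a"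
proof
  assume "generic_fiber_degree l a T X"
  moreover obtain c where "\<forall>v < tnv T. \<forall>m::int. c \<noteq> fst (vpos T X v) + of_int m * l"
    using exists_generic_fiber by blast
  ultimately show "(\<Sum>e<length (tedges T). of_int (fst (edge_slope T e)) * of_int (edge_twist T e)) = 2 * a"
    using fiber_intersection_eq[OF assms] unfolding generic_fiber_degree_def by metis
qed (use fiber_intersection_eq[OF assms] in \<open>simp add: generic_fiber_degree_def\<close>)

lemma mem_cell_iff_of_mem:
  assumes wf: "well_formed T" and bal: "balanced \<delta> T" and l: "0 < l" and X0: "X0 \<in> cell \<delta> l a T"
  shows "X \<in> cell \<delta> l a T \<longleftrightarrow>
    supported_below (ncoord T) X \<and> edges_realized \<delta> l T X \<and> marks_on_edges T X"
  using X0 generic_fiber_degree_iff[OF wf bal l] unfolding mem_cell_iff by blast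

section \<open>Independence of the edge equations\<close>

lemma same_direction_real:
  "same_direction s t \<longleftrightarrow>
    real_of_int (fst s) * of_int (snd t) - of_int (snd s) * of_int (fst t) = 0 \<and>
    real_of_int (fst s) * of_int (fst t) + of_int (snd s) * of_int (snd t) > 0"
proof -
  have "same_direction s t \<longleftrightarrow>
    real_of_int (fst s * snd t - snd s * fst t) = 0 \<and> real_of_int (fst s * fst t + snd s * snd t) > 0"
    unfolding same_direction_def by (simp only: of_int_eq_0_iff of_int_0_less_iff)
  then show ?thesis by simp
qed

lemma orthogonal_is_multiple:
  fixes x y p q :: real
  assumes "x * p + y * q = 0" and "p \<noteq> 0 \<or> q \<noteq> 0"
  obtains a where "x = - a * q" and "y = a * p"
proof
  have n0: "p * p + q * q \<noteq> 0" using assms(2) by (simp add: sum_squares_eq_zero_iff)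
  let ?a = "(y * p - x * q) / (p * p + q * q)"
  have xp: "x * p = - (y * q)" and yq: "y * q = - (x * p)" using assms(1) by linarith+
  have "x * (p * p + q * q) = (x * p) * p + x * q * q" by (simp add: algebra_simps)
  also have "\<dots> = - (y * p - x * q) * q" unfolding xp by (simp add: algebra_simps)
  finally show "x = - ?a * q" using n0 by (simp add: field_simps)
  have "y * (p * p + q * q) = y * p * p + (y * q) * q" by (simp add: algebra_simps)
  also have "\<dots> = (y * p - x * q) * p" unfolding yq by (simp add: algebra_simps)
  finally show "y = ?a * p" using n0 by (simp add: field_simps)
qed

text \<open>All three are multiples of one vector, and two of three nonzero reals have the same sign.\<close>

lemma three_orthogonal_same_direction:
  fixes \<sigma>1 \<sigma>2 \<sigma>3 :: "int \<times> int" and p q :: real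
  assumes pq: "p \<noteq> 0 \<or> q \<noteq> 0"
    and nz: "\<sigma>1 \<noteq> (0, 0)" "\<sigma>2 \<noteq> (0, 0)" "\<sigma>3 \<noteq> (0, 0)"
    and o1: "of_int (fst \<sigma>1) * p + of_int (snd \<sigma>1) * q = 0"
    and o2: "of_int (fst \<sigma>2) * p + of_int (snd \<sigma>2) * q = 0"
    and o3: "of_int (fst \<sigma>3) * p + of_int (snd \<sigma>3) * q = 0"
  shows "same_direction \<sigma>1 \<sigma>2 \<or> same_direction \<sigma>1 \<sigma>3 \<or> same_direction \<sigma>2 \<sigma>3"
proof -
  have n: "p * p + q * q > 0" using pq by (simp add: sum_squares_gt_zero_iff)
  have sd: "same_direction \<sigma> \<tau>" if "fst \<sigma> = - a * q" "snd \<sigma> = a * p"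
      "fst \<tau> = - b * q" "snd \<tau> = b * p" "a * b > 0" for \<sigma> \<tau> :: "int \<times> int" and a b :: real
  proof -
    have "a * b * (p * p + q * q) > 0" using that(5) n by simp
    then show ?thesis unfolding same_direction_real that(1-4) by (simp add: algebra_simps)
  qed
  obtain a1 where a1: "of_int (fst \<sigma>1) = - a1 * q" "of_int (snd \<sigma>1) = a1 * p"
    using orthogonal_is_multiple[OF o1 pq] .
  obtain a2 where a2: "of_int (fst \<sigma>2) = - a2 * q" "of_int (snd \<sigma>2) = a2 * p"
    using orthogonal_is_multiple[OF o2 pq] .
  obtain a3 where a3: "of_int (fst \<sigma>3) = - a3 * q" "of_int (snd \<sigma>3) = a3 * p"
    using orthogonal_is_multiple[OF o3 pq] .
  have "a1 \<noteq> 0" "a2 \<noteq> 0" "a3 \<noteq> 0"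
    using nz a1 a2 a3 by (auto simp: prod_eq_iff)
  then have "a1 * a2 > 0 \<or> a1 * a3 > 0 \<or> a2 * a3 > 0"
    by (cases "a1 > 0"; cases "a2 > 0"; cases "a3 > 0") (auto simp: zero_less_mult_iff)
  then show ?thesis using sd a1 a2 a3 by blast
qed

text \<open>The germ with slope sigma1 carries the zero covector, so the other two carry opposite ones.\<close>

lemma flow_vanishes_at_trivalent_vertex:
  fixes \<sigma>1 \<sigma>2 \<sigma>3 :: "int \<times> int" and \<omega>2 \<omega>3 :: "real \<times> real"
  assumes sx: "fst \<sigma>1 + fst \<sigma>2 + fst \<sigma>3 = 0" and sy: "snd \<sigma>1 + snd \<sigma>2 + snd \<sigma>3 = 0"
    and nz: "\<sigma>1 \<noteq> (0, 0)" "\<sigma>2 \<noteq> (0, 0)" "\<sigma>3 \<noteq> (0, 0)"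
    and nsd: "\<not> same_direction \<sigma>1 \<sigma>2" "\<not> same_direction \<sigma>1 \<sigma>3" "\<not> same_direction \<sigma>2 \<sigma>3"
    and \<omega>: "fst \<omega>2 + fst \<omega>3 = 0" "snd \<omega>2 + snd \<omega>3 = 0"
    and o2: "fst \<omega>2 * of_int (fst \<sigma>2) + snd \<omega>2 * of_int (snd \<sigma>2) = 0"
    and o3: "fst \<omega>3 * of_int (fst \<sigma>3) + snd \<omega>3 * of_int (snd \<sigma>3) = 0"
  shows "\<omega>2 = (0, 0) \<and> \<omega>3 = (0, 0)"
proof (rule ccontr)
  assume "\<not> ?thesis"
  then have pq: "fst \<omega>2 \<noteq> 0 \<or> snd \<omega>2 \<noteq> 0" using \<omega> by (auto simp: prod_eq_iff)
  have "fst \<omega>3 = - fst \<omega>2" "snd \<omega>3 = - snd \<omega>2" using \<omega> by simp_all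
  then have o2': "of_int (fst \<sigma>2) * fst \<omega>2 + of_int (snd \<sigma>2) * snd \<omega>2 = 0"
    and o3': "of_int (fst \<sigma>3) * fst \<omega>2 + of_int (snd \<sigma>3) * snd \<omega>2 = 0"
    using o2 o3 by (simp_all add: algebra_simps)
  have e: "real_of_int (fst \<sigma>1) = - of_int (fst \<sigma>2) - of_int (fst \<sigma>3)"
    "real_of_int (snd \<sigma>1) = - of_int (snd \<sigma>2) - of_int (snd \<sigma>3)"
    using sx sy by (simp_all add: eq_diff_eq flip: of_int_add of_int_minus of_int_diff)
  have "of_int (fst \<sigma>1) * fst \<omega>2 + of_int (snd \<sigma>1) * snd \<omega>2 =
      - (of_int (fst \<sigma>2) * fst \<omega>2 + of_int (snd \<sigma>2) * snd \<omega>2)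
      - (of_int (fst \<sigma>3) * fst \<omega>2 + of_int (snd \<sigma>3) * snd \<omega>2)"
    unfolding e by (simp add: algebra_simps)
  then have o1': "of_int (fst \<sigma>1) * fst \<omega>2 + of_int (snd \<sigma>1) * snd \<omega>2 = 0"
    using o2' o3' by simp
  then show False
    using three_orthogonal_same_direction[OF pq nz o1' o2' o3'] nsd by blast
qed

lemma trivalent_flows_vanish:
  fixes P :: "((int \<times> int) \<times> (real \<times> real)) list"
  assumes len: "length P = 3"
    and nsd: "\<forall>i<3. \<forall>j<3. i \<noteq> j \<longrightarrow> \<not> same_direction (fst (P ! i)) (fst (P ! j))"
    and nz: "\<forall>x\<in>set P. fst x \<noteq> (0, 0)"
    and orth: "\<forall>x\<in>set P. fst (snd x) * of_int (fst (fst x)) + snd (snd x) * of_int (snd (fst x)) = 0"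
    and bal: "sum_list (map (\<lambda>x. fst (fst x)) P) = 0" "sum_list (map (\<lambda>x. snd (fst x)) P) = 0"
    and flow: "sum_list (map (\<lambda>x. fst (snd x)) P) = 0" "sum_list (map (\<lambda>x. snd (snd x)) P) = 0"
    and zero: "\<exists>x\<in>set P. snd x = (0, 0)"
  shows "\<forall>x\<in>set P. snd x = (0, 0)"
proof -
  have "P = [P ! 0, P ! 1, P ! 2]"
    using len by (intro nth_equalityI) (auto simp: less_Suc_eq numeral_3_eq_3 numeral_2_eq_2)
  then obtain A B C where P: "P = [A, B, C]" by blast
  have nAB: "\<not> same_direction (fst A) (fst B)" "\<not> same_direction (fst B) (fst A)"
    using nsd[rule_format, of 0 1] nsd[rule_format, of 1 0] P by simp_all
  have nAC: "\<not> same_direction (fst A) (fst C)" "\<not> same_direction (fst C) (fst A)"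
    using nsd[rule_format, of 0 2] nsd[rule_format, of 2 0] P by simp_all
  have nBC: "\<not> same_direction (fst B) (fst C)" "\<not> same_direction (fst C) (fst B)"
    using nsd[rule_format, of 1 2] nsd[rule_format, of 2 1] P by simp_all
  have nz': "fst A \<noteq> (0, 0)" "fst B \<noteq> (0, 0)" "fst C \<noteq> (0, 0)" using nz P by auto
  have o: "fst (snd A) * of_int (fst (fst A)) + snd (snd A) * of_int (snd (fst A)) = 0"
    "fst (snd B) * of_int (fst (fst B)) + snd (snd B) * of_int (snd (fst B)) = 0"
    "fst (snd C) * of_int (fst (fst C)) + snd (snd C) * of_int (snd (fst C)) = 0"
    using orth P by auto
  have s: "fst (fst A) + fst (fst B) + fst (fst C) = 0" "snd (fst A) + snd (fst B) + snd (fst C) = 0"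
    using bal P by (simp_all add: add.assoc)
  have f: "fst (snd A) + fst (snd B) + fst (snd C) = 0" "snd (snd A) + snd (snd B) + snd (snd C) = 0"
    using flow P by (simp_all add: add.assoc)
  note core = flow_vanishes_at_trivalent_vertex
  from zero P consider "snd A = (0, 0)" | "snd B = (0, 0)" | "snd C = (0, 0)" by auto
  then show ?thesis
  proof cases
    case 1
    with f have "fst (snd B) + fst (snd C) = 0" "snd (snd B) + snd (snd C) = 0" by simp_all
    from core[OF s nz' nAB(1) nAC(1) nBC(1) this o(2,3)] show ?thesis using 1 P by auto
  next
    case 2
    with f have "fst (snd A) + fst (snd C) = 0" "snd (snd A) + snd (snd C) = 0" by simp_all
    moreover have "fst (fst B) + fst (fst A) + fst (fst C) = 0" "snd (fst B) + snd (fst A) + snd (fst C) = 0"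
      using s by linarith+
    ultimately show ?thesis
      using core[of "fst B" "fst A" "fst C", OF _ _ nz'(2,1,3) nAB(2) nBC(1) nAC(1) _ _ o(1,3)] 2 P by auto
  next
    case 3
    with f have "fst (snd A) + fst (snd B) = 0" "snd (snd A) + snd (snd B) = 0" by simp_all
    moreover have "fst (fst C) + fst (fst A) + fst (fst B) = 0" "snd (fst C) + snd (fst A) + snd (fst B) = 0"
      using s by linarith+
    ultimately show ?thesis
      using core[of "fst C" "fst A" "fst B", OF _ _ nz'(3,1,2) nAC(2) nBC(2) nAB(1) _ _ o(1,2)] 3 P by auto
  qed
qed

text \<open>A combination of the edge rows with coefficients alpha_e (row 2e) and beta_e (row 2e+1)
  puts the covector (alpha_e, beta_e) on the source of e and its transport by the transposed
  linear part of phi^k, negated, on the target. The germs at v pair each outgoing slope at v with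
  the covector it carries; the covectors at v sum to the coefficients of v's coordinates.\<close>

definition slope_at_tgt :: "int \<Rightarrow> ttype \<Rightarrow> nat \<Rightarrow> int \<times> int" where
  "slope_at_tgt \<delta> T e = (- fst (dphi_pow \<delta> (edge_twist T e) (edge_slope T e)),
                          - snd (dphi_pow \<delta> (edge_twist T e) (edge_slope T e)))"

definition flow_at_tgt :: "int \<Rightarrow> (nat \<Rightarrow> real) \<Rightarrow> (nat \<Rightarrow> real) \<Rightarrow> ttype \<Rightarrow> nat \<Rightarrow> real \<times> real" where
  "flow_at_tgt \<delta> \<alpha> \<beta> T e =
     (if even (edge_twist T e) then (- \<alpha> e, - \<beta> e) else (- \<alpha> e - of_int \<delta> * \<beta> e, \<beta> e))"

definition edge_germs ::
  "int \<Rightarrow> (nat \<Rightarrow> real) \<Rightarrow> (nat \<Rightarrow> real) \<Rightarrow> ttype \<Rightarrow> nat \<Rightarrow> nat \<Rightarrow> ((int \<times> int) \<times> (real \<times> real)) list"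
where
  "edge_germs \<delta> \<alpha> \<beta> T v e =
     (if edge_src T e = v then [(edge_slope T e, (\<alpha> e, \<beta> e))] else []) @
     (if edge_tgt T e = v then [(slope_at_tgt \<delta> T e, flow_at_tgt \<delta> \<alpha> \<beta> T e)] else [])"

definition germs ::
  "int \<Rightarrow> (nat \<Rightarrow> real) \<Rightarrow> (nat \<Rightarrow> real) \<Rightarrow> ttype \<Rightarrow> nat \<Rightarrow> ((int \<times> int) \<times> (real \<times> real)) list"
where
  "germs \<delta> \<alpha> \<beta> T v =
     concat (map (edge_germs \<delta> \<alpha> \<beta> T v) [0..<length (tedges T)]) @
     map (\<lambda>(u, c). ((0, c), (0, 0))) (filter (\<lambda>(u, c). u = v) (tends T))"

lemma map_fst_germs: "map fst (germs \<delta> \<alpha> \<beta> T v) = out_slopes \<delta> T v"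
proof -
  have idx: "map f xs = map (\<lambda>i. f (xs ! i)) [0..<length xs]" for f and xs :: "'a list"
    by (intro nth_equalityI) auto
  have "map fst (concat (map (edge_germs \<delta> \<alpha> \<beta> T v) [0..<length (tedges T)])) =
        concat (map (\<lambda>(u, w, s, k).
          (if u = v then [s] else []) @
          (if w = v then [(- fst (dphi_pow \<delta> k s), - snd (dphi_pow \<delta> k s))] else [])) (tedges T))"
    unfolding map_concat idx[of _ "tedges T"] map_map
    by (intro arg_cong[where f = concat] map_cong refl)
       (auto simp: edge_germs_def tedges_nth slope_at_tgt_def)
  then show ?thesis unfolding germs_def out_slopes_def by (simp add: case_prod_beta comp_def)
qed

lemma sum_germ_flows:
  "sum_list (map (\<lambda>x. fst (snd x)) (germs \<delta> \<alpha> \<beta> T v)) =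
    (\<Sum>e<length (tedges T). (if edge_src T e = v then \<alpha> e else 0)
                           + (if edge_tgt T e = v then fst (flow_at_tgt \<delta> \<alpha> \<beta> T e) else 0))"
  "sum_list (map (\<lambda>x. snd (snd x)) (germs \<delta> \<alpha> \<beta> T v)) =
    (\<Sum>e<length (tedges T). (if edge_src T e = v then \<beta> e else 0)
                           + (if edge_tgt T e = v then snd (flow_at_tgt \<delta> \<alpha> \<beta> T e) else 0))"
  unfolding germs_def
  by (simp_all add: map_concat sum_list_concat_map comp_def case_prod_beta sum_list_triv
      atLeast0LessThan[symmetric] sum_set_upt_conv_sum_list_nat[symmetric] edge_germs_def)
     (auto intro!: sum.cong)

lemma edge_rows_at_vertex:
  assumes wf: "well_formed T" and v: "v < tnv T"
  shows "(\<Sum>e<length (tedges T). \<alpha> e * edge_row_x T e (2 * v) + \<beta> e * edge_row_y \<delta> T e (2 * v)) =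
      (\<Sum>e<length (tedges T). (if edge_src T e = v then \<alpha> e else 0)
                           + (if edge_tgt T e = v then fst (flow_at_tgt \<delta> \<alpha> \<beta> T e) else 0))"
    and "(\<Sum>e<length (tedges T). \<alpha> e * edge_row_x T e (2 * v + 1) + \<beta> e * edge_row_y \<delta> T e (2 * v + 1)) =
      (\<Sum>e<length (tedges T). (if edge_src T e = v then \<beta> e else 0)
                           + (if edge_tgt T e = v then snd (flow_at_tgt \<delta> \<alpha> \<beta> T e) else 0))"
proof -
  have uw: "edge_src T e < tnv T" "edge_tgt T e < tnv T" if "e \<in> {..<length (tedges T)}" for e
    using edge_vertices_less[OF wf] that by auto
  show "(\<Sum>e<length (tedges T). \<alpha> e * edge_row_x T e (2 * v) + \<beta> e * edge_row_y \<delta> T e (2 * v)) =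
      (\<Sum>e<length (tedges T). (if edge_src T e = v then \<alpha> e else 0)
                           + (if edge_tgt T e = v then fst (flow_at_tgt \<delta> \<alpha> \<beta> T e) else 0))"
    using uw v by (intro sum.cong refl)
      (auto simp: edge_row_x_def edge_row_y_def unit_vec_def flow_at_tgt_def algebra_simps)
  show "(\<Sum>e<length (tedges T). \<alpha> e * edge_row_x T e (2 * v + 1) + \<beta> e * edge_row_y \<delta> T e (2 * v + 1)) =
      (\<Sum>e<length (tedges T). (if edge_src T e = v then \<beta> e else 0)
                           + (if edge_tgt T e = v then snd (flow_at_tgt \<delta> \<alpha> \<beta> T e) else 0))"
    using uw v by (intro sum.cong refl)
      (auto simp: edge_row_x_def edge_row_y_def unit_vec_def flow_at_tgt_def algebra_simps)
qed

lemma edge_rows_at_length: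
  assumes wf: "well_formed T" and e0: "e0 < length (tedges T)"
  shows "(\<Sum>e<length (tedges T). \<alpha> e * edge_row_x T e (2 * tnv T + e0) + \<beta> e * edge_row_y \<delta> T e (2 * tnv T + e0))
       = \<alpha> e0 * of_int (fst (edge_slope T e0)) + \<beta> e0 * of_int (snd (edge_slope T e0))"
proof -
  have "(\<Sum>e<length (tedges T). \<alpha> e * edge_row_x T e (2 * tnv T + e0) + \<beta> e * edge_row_y \<delta> T e (2 * tnv T + e0))
     = (\<Sum>e<length (tedges T). if e = e0 then \<alpha> e * of_int (fst (edge_slope T e)) + \<beta> e * of_int (snd (edge_slope T e)) else 0)"
  proof (intro sum.cong refl)
    fix e assume "e \<in> {..<length (tedges T)}"
    with edge_vertices_less[OF wf, of e] show "\<alpha> e * edge_row_x T e (2 * tnv T + e0) + \<beta> e * edge_row_y \<delta> T e (2 * tnv T + e0)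
      = (if e = e0 then \<alpha> e * of_int (fst (edge_slope T e)) + \<beta> e * of_int (snd (edge_slope T e)) else 0)"
      by (cases "e = e0") (simp_all add: edge_row_x_def edge_row_y_def unit_vec_def)
  qed
  then show ?thesis using e0 by (simp add: sum.delta')
qed

lemma germs_cases:
  assumes "x \<in> set (germs \<delta> \<alpha> \<beta> T v)"
  shows "(\<exists>e<length (tedges T). (edge_src T e = v \<and> x = (edge_slope T e, (\<alpha> e, \<beta> e))) \<or>
            (edge_tgt T e = v \<and> x = (slope_at_tgt \<delta> T e, flow_at_tgt \<delta> \<alpha> \<beta> T e))) \<or>
         (\<exists>c. (v, c) \<in> set (tends T) \<and> x = ((0, c), (0, 0)))"
  using assms by (auto simp: germs_def edge_germs_def split: if_splits)

lemma edge_slope_nonzero: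
  "immersive \<delta> T \<Longrightarrow> e < length (tedges T) \<Longrightarrow> edge_slope T e \<noteq> (0, 0)"
  unfolding immersive_def using nth_mem[of e "tedges T"] tedges_nth[of T e] by fastforce

lemma germ_slope_nonzero:
  assumes im: "immersive \<delta> T" and x: "x \<in> set (germs \<delta> \<alpha> \<beta> T v)"
  shows "fst x \<noteq> (0, 0)"
proof -
  have "c \<noteq> 0" if "(v, c) \<in> set (tends T)" for c
    using im that unfolding immersive_def by fastforce
  moreover have "slope_at_tgt \<delta> T e \<noteq> (0, 0)" if "e < length (tedges T)" for e
    using edge_slope_nonzero[OF im that]
    by (cases "edge_slope T e") (auto simp: slope_at_tgt_def dphi_pow_def dphi_def)
  ultimately show ?thesis using germs_cases[OF x] edge_slope_nonzero[OF im] by fastforce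
qed

text \<open>The linear part of phi is an involution, so transport preserves the pairing of covectors
  with slopes.\<close>

lemma germ_flow_orthogonal:
  assumes orth: "\<forall>e<length (tedges T). \<alpha> e * of_int (fst (edge_slope T e)) + \<beta> e * of_int (snd (edge_slope T e)) = 0"
    and x: "x \<in> set (germs \<delta> \<alpha> \<beta> T v)"
  shows "fst (snd x) * of_int (fst (fst x)) + snd (snd x) * of_int (snd (fst x)) = 0"
proof -
  have "fst (flow_at_tgt \<delta> \<alpha> \<beta> T e) * of_int (fst (slope_at_tgt \<delta> T e))
      + snd (flow_at_tgt \<delta> \<alpha> \<beta> T e) * of_int (snd (slope_at_tgt \<delta> T e))
      = \<alpha> e * of_int (fst (edge_slope T e)) + \<beta> e * of_int (snd (edge_slope T e))" for e
    by (simp add: flow_at_tgt_def slope_at_tgt_def dphi_pow_def dphi_def algebra_simps)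
  then show ?thesis using germs_cases[OF x] orth by (auto simp: algebra_simps)
qed

lemma germ_flows_vanish_at_vertex:
  assumes wf: "well_formed T" and bal: "balanced \<delta> T" and tri: "trivalent \<delta> T"
    and im: "immersive \<delta> T" and v: "v < tnv T"
    and comb: "\<forall>j. (\<Sum>e<length (tedges T). \<alpha> e * edge_row_x T e j + \<beta> e * edge_row_y \<delta> T e j) = 0"
    and zero: "\<exists>x\<in>set (germs \<delta> \<alpha> \<beta> T v). snd x = (0, 0)"
  shows "\<forall>x\<in>set (germs \<delta> \<alpha> \<beta> T v). snd x = (0, 0)"
proof -
  let ?P = "germs \<delta> \<alpha> \<beta> T v"
  have slopes: "out_slopes \<delta> T v = map fst ?P" by (rule map_fst_germs[symmetric])
  have "length (out_slopes \<delta> T v) = 3" using tri v unfolding trivalent_def by blast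
  then have len: "length ?P = 3" unfolding slopes by simp
  have "\<forall>i < length (out_slopes \<delta> T v). \<forall>j < length (out_slopes \<delta> T v).
      i \<noteq> j \<longrightarrow> \<not> same_direction (out_slopes \<delta> T v ! i) (out_slopes \<delta> T v ! j)"
    using im v unfolding immersive_def by blast
  then have nsd: "\<forall>i<3. \<forall>j<3. i \<noteq> j \<longrightarrow> \<not> same_direction (fst (?P ! i)) (fst (?P ! j))"
    unfolding slopes using len by simp
  have "sum_list (map fst (out_slopes \<delta> T v)) = 0" "sum_list (map snd (out_slopes \<delta> T v)) = 0"
    using bal v unfolding balanced_def by blast+
  then have bal': "sum_list (map (\<lambda>x. fst (fst x)) ?P) = 0" "sum_list (map (\<lambda>x. snd (fst x)) ?P) = 0"
    unfolding slopes by (simp_all add: comp_def)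
  have "sum_list (map (\<lambda>x. fst (snd x)) ?P) =
      (\<Sum>e<length (tedges T). \<alpha> e * edge_row_x T e (2 * v) + \<beta> e * edge_row_y \<delta> T e (2 * v))"
    unfolding edge_rows_at_vertex(1)[OF wf v] by (rule sum_germ_flows(1))
  moreover have "sum_list (map (\<lambda>x. snd (snd x)) ?P) =
      (\<Sum>e<length (tedges T). \<alpha> e * edge_row_x T e (2 * v + 1) + \<beta> e * edge_row_y \<delta> T e (2 * v + 1))"
    unfolding edge_rows_at_vertex(2)[OF wf v] by (rule sum_germ_flows(2))
  ultimately have flow: "sum_list (map (\<lambda>x. fst (snd x)) ?P) = 0" "sum_list (map (\<lambda>x. snd (snd x)) ?P) = 0"
    using comb by simp_all
  have "\<forall>e<length (tedges T).
      \<alpha> e * of_int (fst (edge_slope T e)) + \<beta> e * of_int (snd (edge_slope T e)) = 0"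
  proof (intro allI impI)
    fix e assume "e < length (tedges T)"
    from edge_rows_at_length[OF wf this, where \<alpha> = \<alpha> and \<beta> = \<beta> and \<delta> = \<delta>]
    show "\<alpha> e * of_int (fst (edge_slope T e)) + \<beta> e * of_int (snd (edge_slope T e)) = 0"
      using comb by simp
  qed
  then have orth: "\<forall>x\<in>set ?P. fst (snd x) * of_int (fst (fst x)) + snd (snd x) * of_int (snd (fst x)) = 0"
    using germ_flow_orthogonal by blast
  have nz: "\<forall>x\<in>set ?P. fst x \<noteq> (0, 0)" using germ_slope_nonzero[OF im] by blast
  show ?thesis by (rule trivalent_flows_vanish[OF len nsd nz orth bal' flow zero])
qed

text \<open>The flows vanish at the vertex of an end, and vanishing propagates along every edge to
  the adjacent trivalent vertex; since the graph is connected, the combination is trivial.\<close>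

lemma lin_indep_fam_edge_rows:
  assumes wf: "well_formed T" and bal: "balanced \<delta> T" and tri: "trivalent \<delta> T"
    and im: "immersive \<delta> T" and ends: "tends T \<noteq> []"
  shows "lin_indep_fam (edge_row \<delta> T) (2 * length (tedges T))"
  unfolding lin_indep_fam_def
proof (intro allI impI)
  fix c i
  assume H: "\<forall>j. (\<Sum>i<2 * length (tedges T). c i * edge_row \<delta> T i j) = 0"
    and i: "i < 2 * length (tedges T)"
  define \<alpha> where "\<alpha> = (\<lambda>e. c (2 * e))"
  define \<beta> where "\<beta> = (\<lambda>e. c (2 * e + 1))"
  have comb: "\<forall>j. (\<Sum>e<length (tedges T). \<alpha> e * edge_row_x T e j + \<beta> e * edge_row_y \<delta> T e j) = 0"
  proof
    fix j
    have "(\<Sum>i<2 * length (tedges T). c i * edge_row \<delta> T i j)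
        = (\<Sum>i<2 * length (tedges T). if even i then c i * edge_row_x T (i div 2) j
                                        else c i * edge_row_y \<delta> T (i div 2) j)"
      by (intro sum.cong refl) (simp add: edge_row_def)
    then show "(\<Sum>e<length (tedges T). \<alpha> e * edge_row_x T e j + \<beta> e * edge_row_y \<delta> T e j) = 0"
      using H by (simp add: sum_split_even_odd sum.distrib \<alpha>_def \<beta>_def)
  qed
  define Z where "Z = (\<lambda>v. \<forall>x\<in>set (germs \<delta> \<alpha> \<beta> T v). snd x = (0, 0))"
  have vanish: "Z v" if "v < tnv T" "\<exists>x\<in>set (germs \<delta> \<alpha> \<beta> T v). snd x = (0, 0)" for v
    unfolding Z_def by (rule germ_flows_vanish_at_vertex[OF wf bal tri im that(1) comb that(2)])
  have at_src: "(edge_slope T e, (\<alpha> e, \<beta> e)) \<in> set (germs \<delta> \<alpha> \<beta> T (edge_src T e))"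
    and at_tgt: "(slope_at_tgt \<delta> T e, flow_at_tgt \<delta> \<alpha> \<beta> T e) \<in> set (germs \<delta> \<alpha> \<beta> T (edge_tgt T e))"
    if "e < length (tedges T)" for e
    using that unfolding germs_def edge_germs_def by force+
  have flow_at_tgt_0: "flow_at_tgt \<delta> \<alpha> \<beta> T e = (0, 0) \<longleftrightarrow> \<alpha> e = 0 \<and> \<beta> e = 0" for e
    by (auto simp: flow_at_tgt_def)
  have propagate: "Z w" if uw: "(u, w) \<in> adj T" and Zu: "Z u" for u w
  proof -
    from uw consider s k where "(u, w, s, k) \<in> set (tedges T)" | s k where "(w, u, s, k) \<in> set (tedges T)"
      unfolding adj_def by blast
    then show ?thesis
    proof cases
      case 1
      then obtain e where e: "e < length (tedges T)" "tedges T ! e = (u, w, s, k)"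
        by (metis in_set_conv_nth)
      then have uw': "edge_src T e = u" "edge_tgt T e = w" by (simp_all add: edge_src_def edge_tgt_def)
      then have "\<alpha> e = 0 \<and> \<beta> e = 0" using Zu at_src[OF e(1)] unfolding Z_def by fastforce
      then show ?thesis
        using vanish[of w] edge_vertices_less[OF wf e(1)] at_tgt[OF e(1)] flow_at_tgt_0 uw' by fastforce
    next
      case 2
      then obtain e where e: "e < length (tedges T)" "tedges T ! e = (w, u, s, k)"
        by (metis in_set_conv_nth)
      then have uw': "edge_src T e = w" "edge_tgt T e = u" by (simp_all add: edge_src_def edge_tgt_def)
      then have "\<alpha> e = 0 \<and> \<beta> e = 0"
        using Zu at_tgt[OF e(1)] flow_at_tgt_0 unfolding Z_def by fastforce
      then show ?thesis using vanish[of w] edge_vertices_less[OF wf e(1)] at_src[OF e(1)] uw' by fastforce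
    qed
  qed
  obtain u0 c0 where uc: "(u0, c0) \<in> set (tends T)" using ends by (cases "tends T") auto
  have u0: "u0 < tnv T" using wf uc unfolding well_formed_def by fastforce
  have "((0, c0), (0, 0)) \<in> set (germs \<delta> \<alpha> \<beta> T u0)" using uc unfolding germs_def by force
  then have "Z u0" using vanish u0 by fastforce
  have allZ: "Z v" if "v < tnv T" for v
  proof -
    have "(u0, v) \<in> (adj T)\<^sup>*" using wf u0 that unfolding well_formed_def by blast
    then show ?thesis by induction (use \<open>Z u0\<close> propagate in blast)+
  qed
  have "\<alpha> e = 0 \<and> \<beta> e = 0" if "e < length (tedges T)" for e
    using allZ[OF edge_vertices_less(1)[OF wf that]] at_src[OF that] unfolding Z_def by fastforce
  then show "c i = 0"
    using i unfolding \<alpha>_def \<beta>_def by (cases "even i") (auto elim!: evenE oddE)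
qed

section \<open>Dimension of a cell\<close>

lemma length_out_slopes:
  "length (out_slopes \<delta> T v) =
     (\<Sum>e<length (tedges T). (if edge_src T e = v then 1 else 0) + (if edge_tgt T e = v then 1 else 0))
     + length (filter (\<lambda>(u, c). u = v) (tends T))"
  unfolding out_slopes_def
  by (auto simp: length_concat comp_def case_prod_beta sum_list_map_nth tedges_nth intro!: sum.cong)

lemma sum_length_filter_eq:
  assumes "\<forall>x\<in>set xs. f x < (n::nat)"
  shows "(\<Sum>v<n. length (filter (\<lambda>x. f x = v) xs)) = length xs"
  using assms
proof (induction xs)
  case (Cons x xs)
  have "(\<Sum>v<n. length (filter (\<lambda>y. f y = v) (x # xs))) =
        (\<Sum>v<n. (if f x = v then 1 else 0) + length (filter (\<lambda>y. f y = v) xs))"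
    by (intro sum.cong refl) simp
  also have "\<dots> = 1 + length xs" using Cons by (simp add: sum.distrib sum.delta')
  finally show ?case by simp
qed simp

lemma trivalent_vertex_count:
  assumes wf: "well_formed T" and tri: "trivalent \<delta> T"
  shows "3 * tnv T = 2 * length (tedges T) + length (tends T)"
proof -
  have "3 * tnv T = (\<Sum>v<tnv T. length (out_slopes \<delta> T v))"
    using tri unfolding trivalent_def by simp
  also have "\<dots> = (\<Sum>v<tnv T. \<Sum>e<length (tedges T).
        (if edge_src T e = v then 1 else 0) + (if edge_tgt T e = v then 1 else 0))
      + (\<Sum>v<tnv T. length (filter (\<lambda>(u, c). u = v) (tends T)))"
    unfolding length_out_slopes by (rule sum.distrib)
  also have "(\<Sum>v<tnv T. length (filter (\<lambda>(u, c). u = v) (tends T))) = length (tends T)"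
    using sum_length_filter_eq[of "tends T" fst "tnv T"] wf
    by (simp add: well_formed_def case_prod_unfold)
  also have "(\<Sum>v<tnv T. \<Sum>e<length (tedges T).
        (if edge_src T e = v then 1 else 0) + (if edge_tgt T e = v then 1 else 0))
      = (\<Sum>e<length (tedges T). \<Sum>v<tnv T.
        (if edge_src T e = v then 1 else 0) + (if edge_tgt T e = v then (1::nat) else 0))"
    by (rule sum.swap)
  also have "\<dots> = (\<Sum>e<length (tedges T). 2)"
    using edge_vertices_less[OF wf] by (intro sum.cong refl) (simp add: sum.distrib sum.delta)
  finally show ?thesis by simp
qed

lemma ncoord_simple_type:
  assumes st: "simple_type \<delta> g n b \<mu> T" and \<mu>: "\<mu> \<noteq> {#}"
  shows "ncoord T = (size \<mu> + g - 1 + n) + 2 * length (tedges T)"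
proof -
  have wf: "well_formed T" and tri: "trivalent \<delta> T" and gen: "genus T = int g"
    and marks: "length (tmarks T) = n" and ends: "end_weights T = \<mu>"
    using st unfolding simple_type_def by auto
  have "size \<mu> = length (tends T)" using ends by (auto simp: end_weights_def)
  moreover have "size \<mu> \<ge> 1" using \<mu> by (simp add: Suc_le_eq nonempty_has_size)
  ultimately show ?thesis
    using trivalent_vertex_count[OF wf tri] gen marks unfolding genus_def ncoord_def by linarith
qed

definition marks_inside_edges :: "ttype \<Rightarrow> (nat \<Rightarrow> real) \<Rightarrow> bool" where
  "marks_inside_edges T X \<longleftrightarrow> (\<forall>j < length (tmarks T). 0 < mpos T X j \<and>
     (fst (tmarks T ! j) \<longrightarrow> mpos T X j < elen T X (snd (tmarks T ! j))))"

lemma dot_cong_on_support: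
  assumes "supported_below M f" and "\<forall>j<M. x j = x' j"
  shows "dot N f x = dot N f x'"
  unfolding dot_def
proof (intro sum.cong refl)
  fix j
  show "f j * x j = f j * x' j" using assms by (cases "j < M") (auto simp: supported_below_def)
qed

lemma edges_realized_cong:
  assumes wf: "well_formed T" and agree: "\<forall>i < 2 * tnv T + length (tedges T). X i = X' i"
  shows "edges_realized \<delta> l T X \<longleftrightarrow> edges_realized \<delta> l T X'"
proof -
  have "elen T X e = elen T X' e" if "e < length (tedges T)" for e
    using agree that by (simp add: elen_def)
  moreover have "dot (ncoord T) (edge_row \<delta> T q) X = dot (ncoord T) (edge_row \<delta> T q) X'"
    if "q < 2 * length (tedges T)" for q
    using dot_cong_on_support[OF edge_row_supported[OF wf that] agree] .
  ultimately show ?thesis unfolding edges_realized_iff[OF wf] by auto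
qed

lemma marks_inside_imp_on_edges: "marks_inside_edges T X \<Longrightarrow> marks_on_edges T X"
  unfolding marks_inside_edges_def marks_on_edges_def by (simp add: case_prod_beta less_imp_le)

lemma cell_subset_affine_solutions:
  assumes "well_formed T"
  shows "cell \<delta> l a T \<subseteq>
    affine_solutions (ncoord T) (edge_row \<delta> T) (2 * length (tedges T)) (edge_rhs \<delta> l T)"
  using edges_realized_iff[OF assms] by (auto simp: mem_cell_iff affine_solutions_def)

text \<open>Moving every marked point to the middle of its edge (or to distance 1 along its end)
  keeps a point of the cell and makes all its defining inequalities strict.\<close>

lemma exists_cell_point_marks_inside:
  assumes wf: "well_formed T" and bal: "balanced \<delta> T" and l: "0 < l"
    and X0: "X0 \<in> cell \<delta> l a T"
  obtains X where "X \<in> cell \<delta> l a T" and "edges_realized \<delta> l T X" and "marks_inside_edges T X"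
proof
  let ?M = "2 * tnv T + length (tedges T)"
  define X where "X = (\<lambda>i. if ?M \<le> i \<and> i < ncoord T then
      (case tmarks T ! (i - ?M) of (bd, e) \<Rightarrow> if bd then elen T X0 e / 2 else 1) else X0 i)"
  have agree: "\<forall>i < ?M. X i = X0 i" by (simp add: X_def)
  then have same: "elen T X e = elen T X0 e" if "e < length (tedges T)" for e
    using that by (simp add: elen_def)
  have edges0: "edges_realized \<delta> l T X0" using X0 unfolding mem_cell_iff by blast
  then show edges: "edges_realized \<delta> l T X"
    using edges_realized_cong[OF wf agree] by blast
  have pos: "0 < elen T X0 e" if "e < length (tedges T)" for e
    using edges0 that wf by (simp add: edges_realized_iff)
  have "0 < mpos T X j \<and> (fst (tmarks T ! j) \<longrightarrow> mpos T X j < elen T X (snd (tmarks T ! j)))"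
    if j: "j < length (tmarks T)" for j
  proof (cases "fst (tmarks T ! j)")
    case True
    then have "snd (tmarks T ! j) < length (tedges T)"
      using wf nth_mem[OF j] unfolding well_formed_def by fastforce
    then show ?thesis using True j pos same by (simp add: X_def mpos_def ncoord_def case_prod_beta)
  qed (use j in \<open>simp add: X_def mpos_def ncoord_def case_prod_beta\<close>)
  then show inside: "marks_inside_edges T X" unfolding marks_inside_edges_def by blast
  have "supported_below (ncoord T) X"
    using X0 by (simp add: mem_cell_iff supported_below_def X_def)
  then show "X \<in> cell \<delta> l a T"
    using mem_cell_iff_of_mem[OF wf bal l X0] edges marks_inside_imp_on_edges[OF inside] by blast
qed

lemma eventually_at_right_0_pos_affine:
  fixes A B :: real
  assumes "0 < A"
  shows "eventually (\<lambda>t. 0 < A + t * B) (at_right 0)"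
proof -
  have "((\<lambda>t. A + t * B) \<longlongrightarrow> A + 0 * B) (at_right 0)" by (intro tendsto_intros)
  then show ?thesis using assms by (intro order_tendstoD(1)) auto
qed

lemma cell_contains_small_moves:
  assumes wf: "well_formed T" and bal: "balanced \<delta> T" and l: "0 < l"
    and X: "X \<in> cell \<delta> l a T" and inside: "marks_inside_edges T X"
    and y: "supported_below (ncoord T) y"
    and rows: "\<forall>q < 2 * length (tedges T). dot (ncoord T) (edge_row \<delta> T q) y = 0"
  shows "\<exists>t>0. (\<lambda>j. X j + t * y j) \<in> cell \<delta> l a T"
proof -
  define Xt where "Xt = (\<lambda>t j. X j + t * y j)"
  have elen: "elen T (Xt t) e = elen T X e + t * elen T y e" for t e by (simp add: Xt_def elen_def)
  have mpos: "mpos T (Xt t) j = mpos T X j + t * mpos T y j" for t j by (simp add: Xt_def mpos_def)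
  have Xedges: "\<forall>e < length (tedges T). 0 < elen T X e"
    "\<forall>q < 2 * length (tedges T). dot (ncoord T) (edge_row \<delta> T q) X = edge_rhs \<delta> l T q"
    using X edges_realized_iff[OF wf] unfolding mem_cell_iff by auto
  have "\<forall>\<^sub>F t in at_right 0. \<forall>e\<in>{..<length (tedges T)}. 0 < elen T (Xt t) e"
    unfolding elen using Xedges(1)
    by (intro eventually_ball_finite ballI eventually_at_right_0_pos_affine) auto
  moreover have "\<forall>\<^sub>F t in at_right 0. \<forall>j\<in>{..<length (tmarks T)}. 0 < mpos T (Xt t) j \<and>
      (fst (tmarks T ! j) \<longrightarrow> mpos T (Xt t) j < elen T (Xt t) (snd (tmarks T ! j)))"
  proof (intro eventually_ball_finite ballI finite_lessThan eventually_conj)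
    fix j assume "j \<in> {..<length (tmarks T)}"
    then have j: "0 < mpos T X j"
      "fst (tmarks T ! j) \<Longrightarrow> 0 < elen T X (snd (tmarks T ! j)) - mpos T X j"
      using inside unfolding marks_inside_edges_def by auto
    show "\<forall>\<^sub>F t in at_right 0. 0 < mpos T (Xt t) j"
      unfolding mpos using j(1) by (rule eventually_at_right_0_pos_affine)
    show "\<forall>\<^sub>F t in at_right 0.
        fst (tmarks T ! j) \<longrightarrow> mpos T (Xt t) j < elen T (Xt t) (snd (tmarks T ! j))"
    proof (cases "fst (tmarks T ! j)")
      case True
      let ?e = "snd (tmarks T ! j)"
      have "\<forall>\<^sub>F t in at_right 0. 0 < (elen T X ?e - mpos T X j) + t * (elen T y ?e - mpos T y j)"
        using j(2)[OF True] by (rule eventually_at_right_0_pos_affine)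
      then show ?thesis unfolding mpos elen by (rule eventually_mono) (simp add: algebra_simps)
    qed simp
  qed
  moreover have "\<forall>\<^sub>F t in at_right (0::real). 0 < t" by (rule eventually_at_right_less)
  ultimately have "\<forall>\<^sub>F t in at_right 0. 0 < t \<and> (\<forall>e<length (tedges T). 0 < elen T (Xt t) e) \<and>
      marks_inside_edges T (Xt t)"
    unfolding marks_inside_edges_def by eventually_elim simp
  then obtain t where t: "0 < t" "\<forall>e<length (tedges T). 0 < elen T (Xt t) e" "marks_inside_edges T (Xt t)"
    using eventually_happens'[of "at_right (0::real)"] by auto
  have "supported_below (ncoord T) (Xt t)"
    using X y by (simp add: mem_cell_iff supported_below_def Xt_def)
  moreover have "edges_realized \<delta> l T (Xt t)"
    using t(2) Xedges(2) rows by (simp add: edges_realized_iff[OF wf] Xt_def dot_add_scaled)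
  ultimately have "Xt t \<in> cell \<delta> l a T"
    using mem_cell_iff_of_mem[OF wf bal l X] marks_inside_imp_on_edges[OF t(3)] by blast
  then show ?thesis using t(1) unfolding Xt_def by blast
qed

lemma has_aff_dim_cell:
  assumes st: "simple_type \<delta> g n b \<mu> T" and \<mu>: "\<mu> \<noteq> {#}" and l: "0 < l"
    and ne: "cell \<delta> l a T \<noteq> {}"
  shows "has_aff_dim (cell \<delta> l a T) (size \<mu> + g - 1 + n)"
proof -
  have wf: "well_formed T" and bal: "balanced \<delta> T" and tri: "trivalent \<delta> T"
    and im: "immersive \<delta> T" and "end_weights T = \<mu>"
    using st unfolding simple_type_def by blast+
  then have ends: "tends T \<noteq> []" using \<mu> by (auto simp: end_weights_def)
  let ?N = "ncoord T" and ?m = "2 * length (tedges T)"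
  obtain X0 where X0: "X0 \<in> cell \<delta> l a T" using ne by blast
  obtain X where X: "X \<in> cell \<delta> l a T" "marks_inside_edges T X"
    using exists_cell_point_marks_inside[OF wf bal l X0] by blast
  have "\<forall>q<?m. supported_below ?N (edge_row \<delta> T q)"
    using supported_below_mono[OF edge_row_supported[OF wf]] by (simp add: ncoord_def)
  from has_aff_dim_open_in_affine_solutions[OF lin_indep_fam_edge_rows[OF wf bal tri im ends]
      this cell_subset_affine_solutions[OF wf] X(1)]
  have "has_aff_dim (cell \<delta> l a T) (?N - ?m)"
    using cell_contains_small_moves[OF wf bal l X] by blast
  then show ?thesis using ncoord_simple_type[OF st \<mu>] by simp
qed

theorem proposition2p12:
  fixes \<delta> :: int and l a b :: real and g n :: nat and \<mu> :: "nat multiset"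
  assumes "\<delta> \<in> {0, 1}"
    and "0 < l"
    and "2 * a \<in> \<int>" and "2 * b \<in> \<int>"
    and "\<exists>k::int. 2 * b - 2 * of_int \<delta> * a = 2 * of_int k"
    and "\<mu> \<noteq> {#}" and "\<forall>i \<in># \<mu>. 1 \<le> i"
    and "real (sum_mset \<mu>) = 2 * b"
  shows "simple_locus_nonempty \<delta> l g n a b \<mu> \<longrightarrow>
         simple_locus_has_dim \<delta> l g n a b \<mu> (size \<mu> + g - 1 + n)"
proof
  assume "simple_locus_nonempty \<delta> l g n a b \<mu>"
  then obtain T0 where T0: "simple_type \<delta> g n b \<mu> T0" "cell \<delta> l a T0 \<noteq> {}"
    unfolding simple_locus_nonempty_def by blast
  have "d \<le> size \<mu> + g - 1 + n"
    if "simple_type \<delta> g n b \<mu> T" "has_aff_dim (cell \<delta> l a T) d" for T d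
    using has_aff_dim_unique[OF that(2)
        has_aff_dim_cell[OF that(1) assms(6,2) has_aff_dim_nonempty[OF that(2)]]] by simp
  then show "simple_locus_has_dim \<delta> l g n a b \<mu> (size \<mu> + g - 1 + n)"
    unfolding simple_locus_has_dim_def using T0 has_aff_dim_cell[OF T0(1) assms(6,2) T0(2)] by blast
qed

end
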